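(* If a path $\omega\in\Omega$ is ML-random for a computable precise forecasting system $\varphi$, then $I_\textnormal{ML}(\omega)$ is the smallest interval forecast for which $\omega$ is almost ML-random; that is, $\omega$ is almost ML-random for $I_\textnormal{ML}(\omega)$, and $I_\textnormal{ML}(\omega)\subseteq I$ for every interval forecast $I$ for which $\omega$ is almost ML-random.
   Context: $\mathcal{X}=\{0,1\}$; $\Omega=\mathcal{X}^{\mathbb{N}}$ (paths); $\mathbb{S}=\bigcup_{n\ge0}\mathcal X^n$ (situations), $\square$ the empty string, $\omega_{1:n}=(\omega_1,\dots,\omega_n)$. $\mathcal I$: nonempty closed intervals $I\subseteq[0,1]$. A forecasting system is a map $\varphi:\mathbb S\to\mathcal I$, with $\underline\varphi=\min\varphi$, $\overline\varphi=\max\varphi$; precise if $\underline\varphi=\overline\varphi$; an interval forecast $I$ is identified with the constant forecasting system $s\mapsto I$. A real map $r$ on a countable effectively encoded set $\mathcal D$ is computable if there is a recursive $q:\mathcal D\times\mathbb N_0\to\mathbb Q$ with $|r(d)-q(d,n)|<2^{-n}$; lower semicomputable if there is a recursive $q$ with $q(d,n+1)\ge q(d,n)$ and $\lim_nq(d,n)=r(d)$. $\varphi$ is computable if $\underline\varphi,\overline\varphi$ are. For $f:\mathcal X\to\mathbb R$, $\overline E_I(f)=\max_{p\in I}[pf(1)+(1-p)f(0)]$. A test supermartingale for $\varphi$ is $T:\mathbb S\to\mathbb R_{\ge0}$ with $T(\square)=1$ and $\overline E_{\varphi(s)}(T(s\,\cdot)-T(s))\le0$ for all $s$. $\omega$ is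 ML-random for $\varphi$ if no lower semicomputable test supermartingale $T$ for $\varphi$ satisfies $\limsup_nT(\omega_{1:n})=\infty$. $\mathcal I_\textnormal{ML}(\omega)=\{I\in\mathcal I:\omega\text{ ML-random for }I\}$, $I_\textnormal{ML}(\omega)=\bigcap_{I\in\mathcal I_\textnormal{ML}(\omega)}I$. $\omega$ is almost ML-random for $I\in\mathcal I$ if it is ML-random for every interval forecast $[\min I-\epsilon_1,\max I+\epsilon_2]\cap[0,1]$ with $\epsilon_1,\epsilon_2>0$. *)

theory Defs
  imports Complex_Main "HOL-Library.Nat_Bijection" "HOL-Library.Liminf_Limsup" "HOL-Library.Extended_Real"
begin

datatype recf = Z | S | Id nat | Cn recf "recf list" | Pr recf recf | Mn recf

inductive rec_eval :: "recf \<Rightarrow> nat list \<Rightarrow> nat \<Rightarrow> bool" where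
  zero: "rec_eval Z xs 0"
| succ: "rec_eval S (x # xs) (Suc x)"
| proj: "i < length xs \<Longrightarrow> rec_eval (Id i) xs (xs ! i)"
| comp: "list_all2 (\<lambda>g y. rec_eval g xs y) gs ys \<Longrightarrow> rec_eval f ys z \<Longrightarrow> rec_eval (Cn f gs) xs z"
| pr0: "rec_eval f xs y \<Longrightarrow> rec_eval (Pr f g) (0 # xs) y"
| prS: "rec_eval (Pr f g) (n # xs) y \<Longrightarrow> rec_eval g (n # y # xs) z \<Longrightarrow> rec_eval (Pr f g) (Suc n # xs) z"
| mn: "rec_eval f (n # xs) 0 \<Longrightarrow> (\<forall>m<n. \<exists>y. y \<noteq> 0 \<and> rec_eval f (m # xs) y) \<Longrightarrow> rec_eval (Mn f) xs n"

text \<open>Situations are finite bool lists (True = 1, False = 0).\<close>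
type_synonym sit = "bool list"
type_synonym path = "nat \<Rightarrow> bool"

definition sit_encode :: "sit \<Rightarrow> nat" where
  "sit_encode s = list_encode (map (\<lambda>b. if b then 1 else 0) s)"

definition rat_encode :: "rat \<Rightarrow> nat" where
  "rat_encode q = prod_encode (int_encode (fst (quotient_of q)), nat (snd (quotient_of q)))"

definition recursive_sn_rat :: "(sit \<Rightarrow> nat \<Rightarrow> rat) \<Rightarrow> bool" where
  "recursive_sn_rat q \<longleftrightarrow> (\<exists>r. \<forall>d n. rec_eval r [sit_encode d, n] (rat_encode (q d n)))"

definition computable_real :: "(sit \<Rightarrow> real) \<Rightarrow> bool" where
  "computable_real r \<longleftrightarrow> (\<exists>q. recursive_sn_rat q \<and>
      (\<forall>d n. \<bar>r d - real_of_rat (q d n)\<bar> < (1/2) ^ n))"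

definition lower_semicomputable :: "(sit \<Rightarrow> real) \<Rightarrow> bool" where
  "lower_semicomputable r \<longleftrightarrow> (\<exists>q. recursive_sn_rat q \<and>
      (\<forall>d n. q d n \<le> q d (Suc n)) \<and>
      (\<forall>d. (\<lambda>n. real_of_rat (q d n)) \<longlonglongrightarrow> r d))"

definition interval_forecast :: "real set \<Rightarrow> bool" where
  "interval_forecast I \<longleftrightarrow> (\<exists>a b. 0 \<le> a \<and> a \<le> b \<and> b \<le> 1 \<and> I = {a..b})"

definition forecasting_system :: "(sit \<Rightarrow> real set) \<Rightarrow> bool" where
  "forecasting_system \<phi> \<longleftrightarrow> (\<forall>s. interval_forecast (\<phi> s))"

definition lower_fc :: "(sit \<Rightarrow> real set) \<Rightarrow> sit \<Rightarrow> real" where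
  "lower_fc \<phi> s = Inf (\<phi> s)"

definition upper_fc :: "(sit \<Rightarrow> real set) \<Rightarrow> sit \<Rightarrow> real" where
  "upper_fc \<phi> s = Sup (\<phi> s)"

definition precise_fc :: "(sit \<Rightarrow> real set) \<Rightarrow> bool" where
  "precise_fc \<phi> \<longleftrightarrow> (\<forall>s. lower_fc \<phi> s = upper_fc \<phi> s)"

definition computable_fc :: "(sit \<Rightarrow> real set) \<Rightarrow> bool" where
  "computable_fc \<phi> \<longleftrightarrow> computable_real (lower_fc \<phi>) \<and> computable_real (upper_fc \<phi>)"

definition upper_exp :: "real set \<Rightarrow> (bool \<Rightarrow> real) \<Rightarrow> real" where
  "upper_exp I f = (SUP p\<in>I. p * f True + (1 - p) * f False)"

definition test_supermartingale :: "(sit \<Rightarrow> real set) \<Rightarrow> (sit \<Rightarrow> real) \<Rightarrow> bool" where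
  "test_supermartingale \<phi> T \<longleftrightarrow> T [] = 1 \<and> (\<forall>s. 0 \<le> T s) \<and>
     (\<forall>s. upper_exp (\<phi> s) (\<lambda>x. T (s @ [x]) - T s) \<le> 0)"

definition prefix :: "path \<Rightarrow> nat \<Rightarrow> sit" where
  "prefix \<omega> n = map \<omega> [0..<n]"

definition mlrandom :: "(sit \<Rightarrow> real set) \<Rightarrow> path \<Rightarrow> bool" where
  "mlrandom \<phi> \<omega> \<longleftrightarrow> \<not> (\<exists>T. lower_semicomputable T \<and> test_supermartingale \<phi> T \<and>
      limsup (\<lambda>n. ereal (T (prefix \<omega> n))) = \<infinity>)"

definition I_mlr :: "path \<Rightarrow> real set" where
  "I_mlr \<omega> = \<Inter> {I. interval_forecast I \<and> mlrandom (\<lambda>_. I) \<omega>}"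

definition almost_mlrandom :: "real set \<Rightarrow> path \<Rightarrow> bool" where
  "almost_mlrandom I \<omega> \<longleftrightarrow> (\<forall>e1 e2. 0 < e1 \<longrightarrow> 0 < e2 \<longrightarrow>
      mlrandom (\<lambda>_. {Inf I - e1 .. Sup I + e2} \<inter> {0..1}) \<omega>)"

end

theory Submission
  imports Defs
begin

text \<open>Write \<open>L\<close> and \<open>U\<close> for the lower and upper limits of the forecasts of \<open>\<phi>\<close> along \<open>\<omega>\<close>. We show
  \<open>I\<^sub>M\<^sub>L(\<omega>) = [L, U]\<close> and that \<open>\<omega>\<close> is almost random for \<open>[c, d]\<close> iff \<open>c \<le> L\<close> and \<open>U \<le> d\<close>.

  If \<open>\<omega>\<close> were random for \<open>[c, d]\<close> with \<open>L < c\<close>, the forecasts would infinitely often stay below \<open>c\<close>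
  by a margin. At these (computably selected) times one gambler bets against \<open>[c, d]\<close> and another
  against \<open>\<phi>\<close>; their capitals are test supermartingales whose product grows geometrically, so one of
  them is unbounded along \<open>\<omega>\<close>. The case \<open>d < U\<close> is symmetric.

  Conversely, eventually all forecasts along \<open>\<omega>\<close> lie in \<open>[L - e, U + e]\<close>. A test supermartingale for
  this interval, started late enough and frozen once the forecasts leave it, is a test supermartingale
  for \<open>\<phi>\<close> that coincides with a multiple of the original one along \<open>\<omega>\<close>; hence \<open>\<omega>\<close> is random for
  \<open>[L - e, U + e]\<close>.\<close>

section \<open>Total recursive functions\<close>

definition recursive_fn :: "nat \<Rightarrow> (nat list \<Rightarrow> nat) \<Rightarrow> bool" where
  "recursive_fn k f \<longleftrightarrow> (\<exists>r. \<forall>xs. length xs = k \<longrightarrow> rec_eval r xs (f xs))"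

definition recursive_pred :: "nat \<Rightarrow> (nat list \<Rightarrow> bool) \<Rightarrow> bool" where
  "recursive_pred k P \<longleftrightarrow> recursive_fn k (\<lambda>xs. if P xs then 1 else 0)"

named_theorems recursive_intros

lemma recursive_fn_cong:
  "recursive_fn k f \<Longrightarrow> (\<And>xs. length xs = k \<Longrightarrow> f xs = g xs) \<Longrightarrow> recursive_fn k g"
  unfolding recursive_fn_def by metis

lemma recursive_fn_const [recursive_intros]: "recursive_fn k (\<lambda>_. c)"
proof -
  have "\<exists>r. \<forall>xs. rec_eval r xs c"
  proof (induction c)
    case 0
    then show ?case using rec_eval.zero by blast
  next
    case (Suc c)
    then obtain r where r: "\<forall>xs. rec_eval r xs c" by blast
    have "rec_eval (Cn S [r]) xs (Suc c)" for xs
      by (rule rec_eval.comp[where ys="[c]"]) (use r rec_eval.succ[of c "[]"] in auto)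
    then show ?case by blast
  qed
  then show ?thesis unfolding recursive_fn_def by blast
qed

lemma recursive_fn_nth [recursive_intros]: "i < k \<Longrightarrow> recursive_fn k (\<lambda>xs. xs ! i)"
  unfolding recursive_fn_def by (auto intro!: exI[of _ "Id i"] rec_eval.proj)

lemma recursive_fn_compose:
  assumes "recursive_fn (length gs) f" "\<forall>g\<in>set gs. recursive_fn k g"
  shows "recursive_fn k (\<lambda>xs. f (map (\<lambda>g. g xs) gs))"
proof -
  have "\<exists>rs. list_all2 (\<lambda>r g. \<forall>xs. length xs = k \<longrightarrow> rec_eval r xs (g xs)) rs gs"
    using assms(2)
  proof (induction gs)
    case (Cons g gs)
    then show ?case unfolding recursive_fn_def by (auto intro: list_all2_Cons[THEN iffD2])
  qed simp
  then obtain rs where rs: "list_all2 (\<lambda>r g. \<forall>xs. length xs = k \<longrightarrow> rec_eval r xs (g xs)) rs gs"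
    by blast
  obtain rf where rf: "\<forall>ys. length ys = length gs \<longrightarrow> rec_eval rf ys (f ys)"
    using assms(1) unfolding recursive_fn_def by blast
  have "rec_eval (Cn rf rs) xs (f (map (\<lambda>g. g xs) gs))" if "length xs = k" for xs
    using rs that rf
    by (intro rec_eval.comp[where ys="map (\<lambda>g. g xs) gs"]) (auto simp: list_all2_conv_all_nth)
  then show ?thesis unfolding recursive_fn_def by blast
qed

lemma recursive_fn_compose1:
  "recursive_fn 1 (\<lambda>xs. F (xs ! 0)) \<Longrightarrow> recursive_fn k g \<Longrightarrow> recursive_fn k (\<lambda>xs. F (g xs))"
  using recursive_fn_compose[of "[g]" "\<lambda>xs. F (xs ! 0)" k] by simp

lemma recursive_fn_compose2:
  "recursive_fn 2 (\<lambda>xs. F (xs ! 0) (xs ! 1)) \<Longrightarrow> recursive_fn k g \<Longrightarrow> recursive_fn k h \<Longrightarrow>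
    recursive_fn k (\<lambda>xs. F (g xs) (h xs))"
  using recursive_fn_compose[of "[g, h]" "\<lambda>xs. F (xs ! 0) (xs ! 1)" k] by (simp add: numeral_2_eq_2)

lemma recursive_fn_rec_nat:
  assumes f: "recursive_fn k f" and g: "recursive_fn (Suc (Suc k)) g" and m: "recursive_fn k m"
    and F: "\<And>xs. length xs = k \<Longrightarrow> F xs = rec_nat (f xs) (\<lambda>n y. g (n # y # xs)) (m xs)"
  shows "recursive_fn k F"
proof -
  obtain rf where rf: "\<forall>xs. length xs = k \<longrightarrow> rec_eval rf xs (f xs)"
    using f unfolding recursive_fn_def by blast
  obtain rg where rg: "\<forall>xs. length xs = Suc (Suc k) \<longrightarrow> rec_eval rg xs (g xs)"
    using g unfolding recursive_fn_def by blast
  have "rec_eval (Pr rf rg) (n # xs) (rec_nat (f xs) (\<lambda>n y. g (n # y # xs)) n)" if "length xs = k" for n xs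
    by (induction n) (use rf rg that in \<open>auto intro: rec_eval.pr0 rec_eval.prS\<close>)
  then have "\<forall>ys. length ys = Suc k \<longrightarrow>
      rec_eval (Pr rf rg) ys (rec_nat (f (tl ys)) (\<lambda>n y. g (n # y # tl ys)) (hd ys))"
    by (auto simp: length_Suc_conv)
  then have "recursive_fn (Suc k) (\<lambda>ys. rec_nat (f (tl ys)) (\<lambda>n y. g (n # y # tl ys)) (hd ys))"
    unfolding recursive_fn_def by blast
  then have "recursive_fn k (\<lambda>xs. (\<lambda>ys. rec_nat (f (tl ys)) (\<lambda>n y. g (n # y # tl ys)) (hd ys))
      (map (\<lambda>g. g xs) (m # map (\<lambda>i xs. xs ! i) [0..<k])))"
    using m by (intro recursive_fn_compose) (auto intro: recursive_fn_nth)
  moreover have "length xs = k \<Longrightarrow> map ((!) xs) [0..<k] = xs" for xs :: "nat list"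
    using map_nth by blast
  ultimately show ?thesis
    by (elim recursive_fn_cong) (simp add: F comp_def)
qed

lemma recursive_fn_Suc [recursive_intros]: "recursive_fn k g \<Longrightarrow> recursive_fn k (\<lambda>xs. Suc (g xs))"
proof (rule recursive_fn_compose1[where F=Suc])
  show "recursive_fn 1 (\<lambda>xs. Suc (xs ! 0))" unfolding recursive_fn_def
    by (rule exI[of _ S]) (auto simp: length_Suc_conv intro: rec_eval.succ[of _ "[]", simplified])
qed

lemma recursive_fn_add [recursive_intros]:
  "recursive_fn k g \<Longrightarrow> recursive_fn k h \<Longrightarrow> recursive_fn k (\<lambda>xs. g xs + h xs)"
proof (rule recursive_fn_compose2[where F="(+)"])
  have add_rec: "rec_nat b (\<lambda>n y. Suc y) a = a + b" for a b :: nat by (induction a) auto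
  show "recursive_fn 2 (\<lambda>xs. xs ! 0 + xs ! 1)"
    by (rule recursive_fn_rec_nat[where f="\<lambda>xs. xs ! 1" and g="\<lambda>ys. Suc (ys ! 1)" and m="\<lambda>xs. xs ! 0"])
      (auto intro!: recursive_intros simp: add_rec)
qed

lemma recursive_fn_mult [recursive_intros]:
  "recursive_fn k g \<Longrightarrow> recursive_fn k h \<Longrightarrow> recursive_fn k (\<lambda>xs. g xs * h xs)"
proof (rule recursive_fn_compose2[where F="(*)"])
  have mult_rec: "rec_nat 0 (\<lambda>n y. y + b) a = a * b" for a b :: nat by (induction a) auto
  show "recursive_fn 2 (\<lambda>xs. xs ! 0 * xs ! 1)"
    by (rule recursive_fn_rec_nat[where f="\<lambda>_. 0" and g="\<lambda>ys. ys ! 1 + ys ! 3" and m="\<lambda>xs. xs ! 0"])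
      (auto intro!: recursive_intros simp: mult_rec)
qed

lemma recursive_fn_diff [recursive_intros]:
  "recursive_fn k g \<Longrightarrow> recursive_fn k h \<Longrightarrow> recursive_fn k (\<lambda>xs. g xs - h xs)"
proof (rule recursive_fn_compose2[where F="(-)"])
  have pred_rec: "rec_nat 0 (\<lambda>n y. n) a = a - 1" for a :: nat by (induction a) auto
  have "recursive_fn 1 (\<lambda>xs. xs ! 0 - 1)"
    by (rule recursive_fn_rec_nat[where f="\<lambda>_. 0" and g="\<lambda>ys. ys ! 0" and m="\<lambda>xs. xs ! 0"])
      (auto intro!: recursive_intros simp: pred_rec)
  then have pred: "recursive_fn (Suc (Suc 2)) (\<lambda>ys. ys ! 1 - 1)"
    by (rule recursive_fn_compose1) (simp add: recursive_fn_nth)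
  have diff_rec: "rec_nat a (\<lambda>n y. y - Suc 0) b = a - b" for a b :: nat by (induction b) auto
  show "recursive_fn 2 (\<lambda>xs. xs ! 0 - xs ! 1)"
    by (rule recursive_fn_rec_nat[OF _ pred, where f="\<lambda>xs. xs ! 0" and m="\<lambda>xs. xs ! 1"])
      (auto intro!: recursive_intros simp: diff_rec)
qed

lemma recursive_pred_le [recursive_intros]:
  "recursive_fn k g \<Longrightarrow> recursive_fn k h \<Longrightarrow> recursive_pred k (\<lambda>xs. g xs \<le> h xs)"
  unfolding recursive_pred_def
  by (rule recursive_fn_cong[where f="\<lambda>xs. 1 - (g xs - h xs)"]) (auto intro!: recursive_intros)

lemma recursive_pred_less [recursive_intros]:
  "recursive_fn k g \<Longrightarrow> recursive_fn k h \<Longrightarrow> recursive_pred k (\<lambda>xs. g xs < h xs)"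
  using recursive_pred_le[of k "\<lambda>xs. Suc (g xs)" h] by (auto intro!: recursive_intros simp: Suc_le_eq)

lemma recursive_pred_not [recursive_intros]: "recursive_pred k P \<Longrightarrow> recursive_pred k (\<lambda>xs. \<not> P xs)"
  unfolding recursive_pred_def
  by (rule recursive_fn_cong[where f="\<lambda>xs. 1 - (if P xs then 1 else 0)"]) (auto intro!: recursive_intros)

lemma recursive_pred_conj [recursive_intros]:
  "recursive_pred k P \<Longrightarrow> recursive_pred k Q \<Longrightarrow> recursive_pred k (\<lambda>xs. P xs \<and> Q xs)"
  unfolding recursive_pred_def
  by (rule recursive_fn_cong[where f="\<lambda>xs. (if P xs then 1 else 0) * (if Q xs then 1 else 0)"])
    (auto intro!: recursive_intros)

lemma recursive_pred_disj [recursive_intros]: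
  "recursive_pred k P \<Longrightarrow> recursive_pred k Q \<Longrightarrow> recursive_pred k (\<lambda>xs. P xs \<or> Q xs)"
  using recursive_pred_not[OF recursive_pred_conj[OF recursive_pred_not recursive_pred_not], of k P Q]
  by simp

lemma recursive_pred_eq [recursive_intros]:
  "recursive_fn k g \<Longrightarrow> recursive_fn k h \<Longrightarrow> recursive_pred k (\<lambda>xs. g xs = h xs)"
  using recursive_pred_conj[OF recursive_pred_le recursive_pred_le, of k g h h g] by (simp add: eq_iff)

lemma recursive_fn_If [recursive_intros]:
  "recursive_pred k P \<Longrightarrow> recursive_fn k g \<Longrightarrow> recursive_fn k h \<Longrightarrow>
    recursive_fn k (\<lambda>xs. if P xs then g xs else h xs)"
  unfolding recursive_pred_def
  by (rule recursive_fn_cong[where f="\<lambda>xs. (if P xs then 1 else 0) * g xs + (1 - (if P xs then 1 else 0)) * h xs"])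
    (auto intro!: recursive_intros)

lemma recursive_pred_compose1:
  "recursive_pred 1 (\<lambda>xs. P (xs ! 0)) \<Longrightarrow> recursive_fn k g \<Longrightarrow> recursive_pred k (\<lambda>xs. P (g xs))"
  unfolding recursive_pred_def by (rule recursive_fn_compose1[where F="\<lambda>x. if P x then 1 else 0"])

lemma recursive_fn_Least:
  assumes "recursive_pred (Suc k) Q" and ex: "\<And>xs. length xs = k \<Longrightarrow> \<exists>n. Q (n # xs)"
  shows "recursive_fn k (\<lambda>xs. LEAST n. Q (n # xs))"
proof -
  have "recursive_fn (Suc k) (\<lambda>ys. 1 - (if Q ys then 1 else 0))"
    using assms(1) unfolding recursive_pred_def by (intro recursive_fn_diff recursive_fn_const)
  then obtain r where r: "\<And>ys. length ys = Suc k \<Longrightarrow> rec_eval r ys (1 - (if Q ys then 1 else 0))"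
    unfolding recursive_fn_def by blast
  have "rec_eval (Mn r) xs (LEAST n. Q (n # xs))" if "length xs = k" for xs
  proof (rule rec_eval.mn)
    have "Q ((LEAST n. Q (n # xs)) # xs)" using ex[OF that] by (rule LeastI_ex)
    then show "rec_eval r ((LEAST n. Q (n # xs)) # xs) 0"
      using r[of "(LEAST n. Q (n # xs)) # xs"] that by simp
    show "\<forall>m<(LEAST n. Q (n # xs)). \<exists>y. y \<noteq> 0 \<and> rec_eval r (m # xs) y"
    proof (intro allI impI)
      fix m assume "m < (LEAST n. Q (n # xs))"
      then have "\<not> Q (m # xs)" by (rule not_less_Least)
      then show "\<exists>y. y \<noteq> 0 \<and> rec_eval r (m # xs) y"
        using r[of "m # xs"] that by (intro exI[of _ 1]) simp
    qed
  qed
  then show ?thesis unfolding recursive_fn_def by blast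
qed

lemma recursive_fn_div [recursive_intros]:
  "recursive_fn k g \<Longrightarrow> recursive_fn k h \<Longrightarrow> recursive_fn k (\<lambda>xs. g xs div h xs)"
proof (rule recursive_fn_compose2[where F="(div)"])
  have div_Least: "a div b = (LEAST n. b = 0 \<or> a < Suc n * b)" for a b :: nat
  proof (cases "b = 0")
    case False
    then show ?thesis
      by (intro Least_equality[symmetric])
        (auto simp: less_Suc_eq_le div_less_iff_less_mult[symmetric] simp del: mult_Suc)
  qed simp
  have "recursive_fn 2 (\<lambda>xs. LEAST n. (\<lambda>ys. ys ! 2 = 0 \<or> ys ! 1 < Suc (ys ! 0) * ys ! 2) (n # xs))"
  proof (rule recursive_fn_Least)
    show "\<exists>n. (\<lambda>ys. ys ! 2 = 0 \<or> ys ! 1 < Suc (ys ! 0) * ys ! 2) (n # xs)" for xs :: "nat list"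
      by (rule exI[of _ "xs ! 0"]) (cases "xs ! 1"; simp)
  qed (auto intro!: recursive_intros)
  then show "recursive_fn 2 (\<lambda>xs. xs ! 0 div xs ! 1)"
    by (rule recursive_fn_cong) (simp add: div_Least)
qed

lemma recursive_fn_mod [recursive_intros]:
  assumes "recursive_fn k g" "recursive_fn k h"
  shows "recursive_fn k (\<lambda>xs. g xs mod h xs)"
proof (rule recursive_fn_cong)
  show "recursive_fn k (\<lambda>xs. g xs - h xs * (g xs div h xs))"
    using assms by (intro recursive_intros)
qed (simp add: minus_mult_div_eq_mod)

lemma recursive_pred_dvd [recursive_intros]:
  "recursive_fn k g \<Longrightarrow> recursive_fn k h \<Longrightarrow> recursive_pred k (\<lambda>xs. g xs dvd h xs)"
  using recursive_pred_eq[of k "\<lambda>xs. h xs mod g xs" "\<lambda>_. 0"]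
  by (auto intro!: recursive_intros simp: dvd_eq_mod_eq_0)

lemma gcd_eq_Least:
  fixes P Q :: nat
  assumes "Q > 0"
  shows "gcd P Q = Q - (LEAST t. Q \<le> t \<or> ((Q - t) dvd P \<and> (Q - t) dvd Q))"
proof -
  let ?p = "\<lambda>t. Q \<le> t \<or> ((Q - t) dvd P \<and> (Q - t) dvd Q)"
  define t where "t = (LEAST t. ?p t)"
  have G: "0 < gcd P Q" "gcd P Q \<le> Q" using assms by (auto intro: dvd_imp_le)
  then have p: "?p (Q - gcd P Q)" by simp
  then have t: "t \<le> Q - gcd P Q" unfolding t_def by (rule Least_le)
  have "?p t" unfolding t_def using p by (rule LeastI)
  moreover have "t < Q" using t G assms by linarith
  ultimately have "(Q - t) dvd P" "(Q - t) dvd Q" by auto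
  then have "Q - t \<le> gcd P Q" using G by (auto intro: dvd_imp_le)
  then show ?thesis using t G unfolding t_def by simp
qed

lemma recursive_fn_gcd [recursive_intros]:
  "recursive_fn k g \<Longrightarrow> recursive_fn k h \<Longrightarrow> recursive_fn k (\<lambda>xs. gcd (g xs) (h xs))"
proof (rule recursive_fn_compose2[where F=gcd])
  have "recursive_fn 2 (\<lambda>xs. LEAST n. (\<lambda>ys. ys ! 2 \<le> ys ! 0 \<or>
      ((ys ! 2 - ys ! 0) dvd ys ! 1 \<and> (ys ! 2 - ys ! 0) dvd ys ! 2)) (n # xs))"
  proof (rule recursive_fn_Least)
    show "\<exists>n. (\<lambda>ys. ys ! 2 \<le> ys ! 0 \<or> ((ys ! 2 - ys ! 0) dvd ys ! 1 \<and> (ys ! 2 - ys ! 0) dvd ys ! 2))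
        (n # xs)" for xs :: "nat list"
      by (rule exI[of _ "xs ! 1"]) auto
  qed (auto intro!: recursive_intros)
  then have "recursive_fn 2 (\<lambda>xs. if xs ! 1 = 0 then xs ! 0 else xs ! 1 -
      (LEAST n. xs ! 1 \<le> n \<or> ((xs ! 1 - n) dvd xs ! 0 \<and> (xs ! 1 - n) dvd xs ! 1)))"
    by (intro recursive_intros) simp_all
  then show "recursive_fn 2 (\<lambda>xs. gcd (xs ! 0) (xs ! 1))"
    by (rule recursive_fn_cong) (simp add: gcd_eq_Least)
qed

section \<open>Recursive operations on codes\<close>

lemma recursive_fn_triangle [recursive_intros]:
  "recursive_fn k g \<Longrightarrow> recursive_fn k (\<lambda>xs. triangle (g xs))"
  unfolding triangle_def by (intro recursive_intros)

lemma recursive_fn_prod_encode [recursive_intros]: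
  "recursive_fn k g \<Longrightarrow> recursive_fn k h \<Longrightarrow> recursive_fn k (\<lambda>xs. prod_encode (g xs, h xs))"
  unfolding prod_encode_def by (simp, intro recursive_intros)

definition triangle_root :: "nat \<Rightarrow> nat" where
  "triangle_root m = (LEAST w. m < triangle (Suc w))"

lemma less_triangle_Suc: "m < triangle (Suc m)"
  by (induction m) (auto simp: triangle_Suc)

lemma triangle_root_bounds: "triangle (triangle_root m) \<le> m" "m < triangle (Suc (triangle_root m))"
proof -
  show "m < triangle (Suc (triangle_root m))"
    unfolding triangle_root_def by (rule LeastI[of _ m, OF less_triangle_Suc])
  show "triangle (triangle_root m) \<le> m"
  proof (cases "triangle_root m")
    case (Suc w)
    then have "\<not> m < triangle (Suc w)"
      unfolding triangle_root_def by (metis lessI not_less_Least)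
    then show ?thesis using Suc by simp
  qed simp
qed

lemma prod_decode_triangle_root:
  "prod_decode m = (m - triangle (triangle_root m), triangle_root m - (m - triangle (triangle_root m)))"
proof -
  have "m - triangle (triangle_root m) \<le> triangle_root m"
    using triangle_root_bounds[of m] by (simp add: triangle_Suc)
  then have "prod_encode (m - triangle (triangle_root m), triangle_root m - (m - triangle (triangle_root m))) = m"
    using triangle_root_bounds(1)[of m] by (simp add: prod_encode_def)
  then show ?thesis by (metis prod_encode_inverse)
qed

lemma recursive_fn_triangle_root [recursive_intros]:
  "recursive_fn k g \<Longrightarrow> recursive_fn k (\<lambda>xs. triangle_root (g xs))"
proof (rule recursive_fn_compose1[where F=triangle_root])
  have "recursive_fn 1 (\<lambda>xs. LEAST n. (\<lambda>ys. ys ! 1 < triangle (Suc (ys ! 0))) (n # xs))"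
  proof (rule recursive_fn_Least)
    show "\<exists>n. (\<lambda>ys. ys ! 1 < triangle (Suc (ys ! 0))) (n # xs)" for xs
      using less_triangle_Suc[of "xs ! 0"] by (metis nth_Cons_0 nth_Cons_Suc One_nat_def)
  qed (auto intro!: recursive_intros)
  then show "recursive_fn 1 (\<lambda>xs. triangle_root (xs ! 0))"
    by (rule recursive_fn_cong) (simp add: triangle_root_def)
qed

lemma recursive_fn_fst_prod_decode [recursive_intros]:
  "recursive_fn k g \<Longrightarrow> recursive_fn k (\<lambda>xs. fst (prod_decode (g xs)))"
  by (subst prod_decode_triangle_root, simp, intro recursive_intros)

lemma recursive_fn_snd_prod_decode [recursive_intros]:
  "recursive_fn k g \<Longrightarrow> recursive_fn k (\<lambda>xs. snd (prod_decode (g xs)))"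
  by (subst prod_decode_triangle_root, simp, intro recursive_intros)

definition enc_tl :: "nat \<Rightarrow> nat" where
  "enc_tl c = (if c = 0 then 0 else snd (prod_decode (c - 1)))"

definition enc_hd :: "nat \<Rightarrow> nat" where
  "enc_hd c = (if c = 0 then 0 else fst (prod_decode (c - 1)))"

definition enc_drop :: "nat \<Rightarrow> nat \<Rightarrow> nat" where
  "enc_drop n c = rec_nat c (\<lambda>i y. enc_tl y) n"

definition enc_nth :: "nat \<Rightarrow> nat \<Rightarrow> nat" where
  "enc_nth c j = enc_hd (enc_drop j c)"

definition enc_length :: "nat \<Rightarrow> nat" where
  "enc_length c = (LEAST m. enc_drop m c = 0)"

definition enc_take :: "nat \<Rightarrow> nat \<Rightarrow> nat" where
  "enc_take m c = rec_nat 0 (\<lambda>i acc. Suc (prod_encode (enc_nth c (m - Suc i), acc))) m"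

lemma enc_tl_list_encode: "enc_tl (list_encode l) = list_encode (tl l)"
  by (cases l) (auto simp: enc_tl_def)

lemma enc_hd_list_encode: "l \<noteq> [] \<Longrightarrow> enc_hd (list_encode l) = hd l"
  by (cases l) (auto simp: enc_hd_def)

lemma enc_drop_list_encode: "enc_drop n (list_encode l) = list_encode (drop n l)"
  by (induction n) (auto simp: enc_drop_def enc_tl_list_encode drop_Suc tl_drop)

lemma enc_nth_list_encode: "j < length l \<Longrightarrow> enc_nth (list_encode l) j = l ! j"
  by (simp add: enc_nth_def enc_drop_list_encode enc_hd_list_encode hd_drop_conv_nth)

lemma enc_length_list_encode: "enc_length (list_encode l) = length l"
proof -
  have "list_encode l' = 0 \<longleftrightarrow> l' = []" for l' by (cases l') auto
  then show ?thesis
    unfolding enc_length_def enc_drop_list_encode by (intro Least_equality) auto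
qed

lemma enc_take_list_encode:
  assumes "m \<le> length l"
  shows "enc_take m (list_encode l) = list_encode (take m l)"
proof -
  have "rec_nat 0 (\<lambda>i acc. Suc (prod_encode (enc_nth (list_encode l) (m - Suc i), acc))) i
      = list_encode (drop (m - i) (take m l))" if "i \<le> m" for i
    using that
  proof (induction i)
    case (Suc i)
    then have "drop (m - Suc i) (take m l) = l ! (m - Suc i) # drop (m - i) (take m l)"
      using assms by (simp add: Cons_nth_drop_Suc[symmetric] Suc_diff_Suc)
    then show ?case using Suc assms by (simp add: enc_nth_list_encode)
  qed simp
  from this[of m] show ?thesis by (simp add: enc_take_def)
qed

lemma recursive_fn_enc_tl [recursive_intros]: "recursive_fn k g \<Longrightarrow> recursive_fn k (\<lambda>xs. enc_tl (g xs))"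
  unfolding enc_tl_def by (intro recursive_intros)

lemma recursive_fn_enc_hd [recursive_intros]: "recursive_fn k g \<Longrightarrow> recursive_fn k (\<lambda>xs. enc_hd (g xs))"
  unfolding enc_hd_def by (intro recursive_intros)

lemma recursive_fn_enc_drop [recursive_intros]:
  "recursive_fn k g \<Longrightarrow> recursive_fn k h \<Longrightarrow> recursive_fn k (\<lambda>xs. enc_drop (g xs) (h xs))"
proof (rule recursive_fn_compose2[where F=enc_drop])
  show "recursive_fn 2 (\<lambda>xs. enc_drop (xs ! 0) (xs ! 1))"
    by (rule recursive_fn_rec_nat[where g="\<lambda>ys. enc_tl (ys ! 1)" and f="\<lambda>xs. xs ! 1" and m="\<lambda>xs. xs ! 0"])
      (auto intro!: recursive_intros simp: enc_drop_def)
qed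

lemma recursive_fn_enc_nth [recursive_intros]:
  "recursive_fn k g \<Longrightarrow> recursive_fn k h \<Longrightarrow> recursive_fn k (\<lambda>xs. enc_nth (g xs) (h xs))"
  unfolding enc_nth_def by (intro recursive_intros)

lemma recursive_fn_enc_length [recursive_intros]:
  "recursive_fn k g \<Longrightarrow> recursive_fn k (\<lambda>xs. enc_length (g xs))"
proof (rule recursive_fn_compose1[where F=enc_length])
  have "recursive_fn 1 (\<lambda>xs. LEAST n. (\<lambda>ys. enc_drop (ys ! 0) (ys ! 1) = 0) (n # xs))"
  proof (rule recursive_fn_Least)
    show "\<exists>n. (\<lambda>ys. enc_drop (ys ! 0) (ys ! 1) = 0) (n # xs)" for xs
      using enc_drop_list_encode[of "length (list_decode (xs ! 0))" "list_decode (xs ! 0)"]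
      by (auto simp: list_decode_inverse)
  qed (auto intro!: recursive_intros)
  then show "recursive_fn 1 (\<lambda>xs. enc_length (xs ! 0))"
    by (rule recursive_fn_cong) (simp add: enc_length_def)
qed

lemma recursive_fn_enc_take [recursive_intros]:
  "recursive_fn k g \<Longrightarrow> recursive_fn k h \<Longrightarrow> recursive_fn k (\<lambda>xs. enc_take (g xs) (h xs))"
proof (rule recursive_fn_compose2[where F=enc_take])
  show "recursive_fn 2 (\<lambda>xs. enc_take (xs ! 0) (xs ! 1))"
    by (rule recursive_fn_rec_nat[where f="\<lambda>xs. 0" and m="\<lambda>xs. xs ! 0"
          and g="\<lambda>ys. Suc (prod_encode (enc_nth (ys ! 3) (ys ! 2 - Suc (ys ! 0)), ys ! 1))"])
      (auto intro!: recursive_intros simp: enc_take_def)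
qed

text \<open>A rational \<open>a / b\<close> in lowest terms is coded as \<open>prod_encode (int_encode a, b)\<close>, and
  \<open>int_encode a\<close> is \<open>2 a\<close> for \<open>a \<ge> 0\<close> and \<open>- 2 a - 1\<close> for \<open>a < 0\<close>.\<close>

definition enc_rat_neg :: "nat \<Rightarrow> nat" where
  "enc_rat_neg z = fst (prod_decode z) mod 2"

definition enc_rat_abs :: "nat \<Rightarrow> nat" where
  "enc_rat_abs z = (fst (prod_decode z) + 1) div 2"

definition enc_rat_den :: "nat \<Rightarrow> nat" where
  "enc_rat_den z = snd (prod_decode z)"

definition enc_int :: "bool \<Rightarrow> nat \<Rightarrow> nat" where
  "enc_int neg a = (if neg \<and> 0 < a then 2 * a - 1 else 2 * a)"

definition enc_rat_mult :: "nat \<Rightarrow> nat \<Rightarrow> nat" where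
  "enc_rat_mult z1 z2 =
    (let a = enc_rat_abs z1 * enc_rat_abs z2; b = enc_rat_den z1 * enc_rat_den z2; g = gcd a b
     in prod_encode (enc_int ((enc_rat_neg z1 + enc_rat_neg z2) mod 2 = 1) (a div g), b div g))"

definition enc_rat_le :: "nat \<Rightarrow> nat \<Rightarrow> bool" where
  "enc_rat_le z1 z2 \<longleftrightarrow>
    (enc_rat_neg z1 = 1 \<and>
      (enc_rat_neg z2 \<noteq> 1 \<or> enc_rat_abs z2 * enc_rat_den z1 \<le> enc_rat_abs z1 * enc_rat_den z2)) \<or>
    (enc_rat_neg z1 \<noteq> 1 \<and> enc_rat_neg z2 = 0 \<and>
      enc_rat_abs z1 * enc_rat_den z2 \<le> enc_rat_abs z2 * enc_rat_den z1)"

lemma enc_rat_parts: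
  assumes "quotient_of q = (a, b)"
  shows "enc_rat_neg (rat_encode q) = (if a < 0 then 1 else 0)"
    and "enc_rat_abs (rat_encode q) = nat \<bar>a\<bar>"
    and "enc_rat_den (rat_encode q) = nat b"
  using assms
  by (auto simp: enc_rat_neg_def enc_rat_abs_def enc_rat_den_def rat_encode_def int_encode_def sum_encode_def)

lemma enc_int_eq_int_encode: "enc_int neg a = int_encode (if neg then - int a else int a)"
  by (auto simp: enc_int_def int_encode_def sum_encode_def)

lemma enc_rat_mult_rat_encode: "enc_rat_mult (rat_encode p) (rat_encode q) = rat_encode (p * q)"
proof -
  obtain a1 b1 where qp: "quotient_of p = (a1, b1)" by (cases "quotient_of p")
  obtain a2 b2 where qq: "quotient_of q = (a2, b2)" by (cases "quotient_of q")
  have b1: "b1 > 0" using qp by (rule quotient_of_denom_pos)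
  have b2: "b2 > 0" using qq by (rule quotient_of_denom_pos)
  define P where "P = nat \<bar>a1\<bar> * nat \<bar>a2\<bar>"
  define Q where "Q = nat b1 * nat b2"
  define G where "G = gcd P Q"
  define neg where "neg \<longleftrightarrow> (a1 < 0) \<noteq> (a2 < 0)"
  have G0: "G > 0" using b1 b2 by (simp add: G_def Q_def)
  have gG: "gcd (a1 * a2) (b1 * b2) = int G"
    using b1 b2 by (simp add: gcd_int_def G_def P_def Q_def abs_mult nat_mult_distrib)
  have aP: "a1 * a2 = (if neg then - int P else int P)"
    unfolding neg_def P_def
    by (cases "a1 < 0"; cases "a2 < 0") (auto simp: abs_if mult_less_0_iff zero_le_mult_iff)
  obtain t where Pt: "P = G * t" using dvd_def[of G P] by (auto simp: G_def)
  have num: "a1 * a2 div int G = (if neg then - int (P div G) else int (P div G))"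
  proof -
    have "- (int G * int t) div int G = - int t"
      using G0 nonzero_mult_div_cancel_left[of "int G" "- int t"] by simp
    then show ?thesis unfolding aP Pt using G0 by auto
  qed
  have "b1 * b2 = int Q" using b1 b2 by (simp add: Q_def)
  then have den: "nat (b1 * b2 div int G) = Q div G" by (simp add: zdiv_int[symmetric])
  have "quotient_of (p * q) = (a1 * a2 div int G, b1 * b2 div int G)"
    using b1 b2 by (simp add: rat_times_code qp qq Rat.normalize_def gG Let_def)
  then have "rat_encode (p * q) = prod_encode (int_encode (a1 * a2 div int G), Q div G)"
    by (simp add: rat_encode_def den)
  also have "\<dots> = enc_rat_mult (rat_encode p) (rat_encode q)"
    unfolding enc_rat_mult_def num enc_int_eq_int_encode[symmetric]
    using enc_rat_parts[OF qp] enc_rat_parts[OF qq] by (simp add: neg_def P_def Q_def G_def Let_def)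
  finally show ?thesis ..
qed

lemma enc_rat_le_rat_encode: "enc_rat_le (rat_encode p) (rat_encode q) \<longleftrightarrow> p \<le> q"
proof -
  obtain a1 b1 where qp: "quotient_of p = (a1, b1)" by (cases "quotient_of p")
  obtain a2 b2 where qq: "quotient_of q = (a2, b2)" by (cases "quotient_of q")
  have b1: "b1 > 0" using qp by (rule quotient_of_denom_pos)
  have b2: "b2 > 0" using qq by (rule quotient_of_denom_pos)
  have "enc_rat_le (rat_encode p) (rat_encode q) \<longleftrightarrow>
      (if a1 < 0 then (a2 < 0 \<longrightarrow> \<bar>a2\<bar> * b1 \<le> \<bar>a1\<bar> * b2) else (a2 \<ge> 0 \<and> \<bar>a1\<bar> * b2 \<le> \<bar>a2\<bar> * b1))"
  proof -
    have "nat x * nat y \<le> nat u * nat v \<longleftrightarrow> x * y \<le> u * v"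
      if "0 \<le> x" "0 \<le> y" "0 \<le> u" "0 \<le> v" for x y u v :: int
      using that by (simp add: nat_mult_distrib[symmetric] nat_le_eq_zle)
    then show ?thesis
      unfolding enc_rat_le_def enc_rat_parts[OF qp] enc_rat_parts[OF qq] using b1 b2 by auto
  qed
  also have "\<dots> \<longleftrightarrow> a1 * b2 \<le> b1 * a2"
  proof -
    have "a1 < 0 \<longleftrightarrow> a1 * b2 < 0" "a2 < 0 \<longleftrightarrow> b1 * a2 < 0"
      "\<bar>a1\<bar> * b2 = \<bar>a1 * b2\<bar>" "\<bar>a2\<bar> * b1 = \<bar>b1 * a2\<bar>"
      using b1 b2 by (auto simp: mult_less_0_iff abs_mult)
    then show ?thesis by (simp only:) arith
  qed
  also have "\<dots> \<longleftrightarrow> p \<le> q" by (simp add: rat_less_eq_code qp qq)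
  finally show ?thesis .
qed

lemma recursive_fn_enc_rat_mult [recursive_intros]:
  "recursive_fn k g \<Longrightarrow> recursive_fn k h \<Longrightarrow> recursive_fn k (\<lambda>xs. enc_rat_mult (g xs) (h xs))"
  unfolding enc_rat_mult_def enc_int_def enc_rat_neg_def enc_rat_abs_def enc_rat_den_def Let_def
  by (intro recursive_intros)

lemma recursive_pred_enc_rat_le [recursive_intros]:
  "recursive_fn k g \<Longrightarrow> recursive_fn k h \<Longrightarrow> recursive_pred k (\<lambda>xs. enc_rat_le (g xs) (h xs))"
  unfolding enc_rat_le_def enc_rat_neg_def enc_rat_abs_def enc_rat_den_def
  by (intro recursive_intros)

definition sit_decode :: "nat \<Rightarrow> sit" where
  "sit_decode c = map (\<lambda>x. x \<noteq> 0) (list_decode c)"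

lemma sit_decode_sit_encode [simp]: "sit_decode (sit_encode s) = s"
  by (simp add: sit_decode_def sit_encode_def comp_def)

lemma enc_length_sit_encode: "enc_length (sit_encode s) = length s"
  by (simp add: sit_encode_def enc_length_list_encode)

lemma enc_nth_sit_encode: "m < length s \<Longrightarrow> enc_nth (sit_encode s) m = (if s ! m then 1 else 0)"
  by (simp add: sit_encode_def enc_nth_list_encode)

lemma enc_take_sit_encode: "m \<le> length s \<Longrightarrow> enc_take m (sit_encode s) = sit_encode (take m s)"
  by (simp add: sit_encode_def enc_take_list_encode take_map)

lemma recursive_fn_sit_encode_sit_decode [recursive_intros]:
  "recursive_fn k g \<Longrightarrow> recursive_fn k (\<lambda>xs. sit_encode (sit_decode (g xs)))"
proof (rule recursive_fn_compose1[where F="\<lambda>c. sit_encode (sit_decode c)"])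
  let ?bit = "\<lambda>x::nat. if x = 0 then 0 else 1::nat"
  let ?step = "\<lambda>c i acc. Suc (prod_encode (?bit (enc_nth c (enc_length c - Suc i)), acc))"
  have "rec_nat 0 (?step (list_encode l)) i = list_encode (map ?bit (drop (length l - i) l))"
    if "i \<le> length l" for i l
    using that
  proof (induction i)
    case (Suc i)
    then have "drop (length l - Suc i) l = l ! (length l - Suc i) # drop (length l - i) l"
      by (simp add: Cons_nth_drop_Suc[symmetric] Suc_diff_Suc)
    then show ?case using Suc by (simp add: enc_nth_list_encode enc_length_list_encode)
  qed simp
  from this[of "length l" l for l]
  have "sit_encode (sit_decode (list_encode l)) = rec_nat 0 (?step (list_encode l)) (enc_length (list_encode l))"
    for l by (auto simp: sit_encode_def sit_decode_def enc_length_list_encode intro!: arg_cong[where f=list_encode])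
  from this[of "list_decode c" for c]
  have rec: "sit_encode (sit_decode c) = rec_nat 0 (?step c) (enc_length c)" for c
    by (simp only: list_decode_inverse)
  show "recursive_fn 1 (\<lambda>xs. sit_encode (sit_decode (xs ! 0)))"
    by (rule recursive_fn_rec_nat[where f="\<lambda>_. 0" and m="\<lambda>xs. enc_length (xs ! 0)"
          and g="\<lambda>ys. ?step (ys ! 2) (ys ! 0) (ys ! 1)"])
      (auto intro!: recursive_intros simp: rec)
qed

lemma recursive_sn_ratD:
  assumes "recursive_sn_rat q" "recursive_fn k g" "recursive_fn k h"
  shows "recursive_fn k (\<lambda>xs. rat_encode (q (sit_decode (g xs)) (h xs)))"
proof -
  obtain r where r: "\<And>d n. rec_eval r [sit_encode d, n] (rat_encode (q d n))"
    using assms(1) unfolding recursive_sn_rat_def by blast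
  obtain r1 where r1: "\<forall>xs. length xs = k \<longrightarrow> rec_eval r1 xs (sit_encode (sit_decode (g xs)))"
    using recursive_fn_sit_encode_sit_decode[OF assms(2)] unfolding recursive_fn_def by blast
  obtain r2 where r2: "\<forall>xs. length xs = k \<longrightarrow> rec_eval r2 xs (h xs)"
    using assms(3) unfolding recursive_fn_def by blast
  have "rec_eval (Cn r [r1, r2]) xs (rat_encode (q (sit_decode (g xs)) (h xs)))" if "length xs = k" for xs
    using r1 r2 that r[of "sit_decode (g xs)" "h xs"] by (intro rec_eval.comp) auto
  then show ?thesis unfolding recursive_fn_def by blast
qed

lemma recursive_sn_ratI:
  assumes "recursive_fn 2 F" "\<And>d n. F [sit_encode d, n] = rat_encode (q d n)"
  shows "recursive_sn_rat q"
proof -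
  obtain r where "\<forall>xs. length xs = 2 \<longrightarrow> rec_eval r xs (F xs)"
    using assms(1) unfolding recursive_fn_def by blast
  then show ?thesis
    unfolding recursive_sn_rat_def using assms(2) by (metis length_Cons list.size(3) numeral_2_eq_2)
qed

definition decidable_sit :: "(sit \<Rightarrow> bool) \<Rightarrow> bool" where
  "decidable_sit P \<longleftrightarrow> recursive_pred 1 (\<lambda>xs. P (sit_decode (xs ! 0)))"

lemma decidable_sit_conj: "decidable_sit P \<Longrightarrow> decidable_sit Q \<Longrightarrow> decidable_sit (\<lambda>t. P t \<and> Q t)"
  unfolding decidable_sit_def by (rule recursive_pred_conj)

lemma decidable_sit_mult_le:
  assumes "recursive_sn_rat q"
  shows "decidable_sit (\<lambda>t. u * q t k \<le> v)" "decidable_sit (\<lambda>t. v \<le> u * q t k)"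
proof -
  let ?q = "\<lambda>xs. enc_rat_mult (rat_encode u) (rat_encode (q (sit_decode (xs ! 0)) k))"
  have "recursive_pred 1 (\<lambda>xs. enc_rat_le (?q xs) (rat_encode v))"
    "recursive_pred 1 (\<lambda>xs. enc_rat_le (rat_encode v) (?q xs))"
    by (auto intro!: recursive_intros recursive_sn_ratD[OF assms])
  then show "decidable_sit (\<lambda>t. u * q t k \<le> v)" "decidable_sit (\<lambda>t. v \<le> u * q t k)"
    unfolding decidable_sit_def by (simp_all add: enc_rat_mult_rat_encode enc_rat_le_rat_encode)
qed

lemma forecasting_systemD:
  assumes "forecasting_system \<phi>"
  shows "\<phi> s \<noteq> {}" "\<phi> s \<subseteq> {0..1}" "lower_fc \<phi> s \<in> \<phi> s"
proof -
  obtain a b where "0 \<le> a" "a \<le> b" "b \<le> 1" "\<phi> s = {a..b}"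
    using assms unfolding forecasting_system_def interval_forecast_def by blast
  then show "\<phi> s \<noteq> {}" "\<phi> s \<subseteq> {0..1}" "lower_fc \<phi> s \<in> \<phi> s" by (auto simp: lower_fc_def)
qed

lemma precise_fc_singleton:
  assumes "forecasting_system \<phi>" "precise_fc \<phi>"
  shows "\<phi> s = {lower_fc \<phi> s}"
proof -
  obtain a b where "a \<le> b" "\<phi> s = {a..b}"
    using assms(1) unfolding forecasting_system_def interval_forecast_def by blast
  moreover have "lower_fc \<phi> s = upper_fc \<phi> s" using assms(2) unfolding precise_fc_def by blast
  ultimately show ?thesis by (auto simp: lower_fc_def upper_fc_def)
qed

lemma upper_exp_nonpos:
  assumes "I \<noteq> {}" "\<And>p. p \<in> I \<Longrightarrow> p * f True + (1 - p) * f False \<le> 0"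
  shows "upper_exp I f \<le> 0"
  unfolding upper_exp_def using assms by (intro cSUP_least) auto

lemma expectation_le_upper_exp:
  assumes "p \<in> I" "I \<subseteq> {0..1}"
  shows "p * f True + (1 - p) * f False \<le> upper_exp I f"
proof -
  have "bdd_above ((\<lambda>p. p * f True + (1 - p) * f False) ` I)"
  proof (rule bdd_aboveI2)
    fix p assume "p \<in> I"
    then have p: "0 \<le> p" "p \<le> 1" using assms(2) by auto
    have "p * f True \<le> p * \<bar>f True\<bar>" "(1 - p) * f False \<le> (1 - p) * \<bar>f False\<bar>"
      using p by (auto intro: mult_left_mono)
    moreover have "p * \<bar>f True\<bar> \<le> \<bar>f True\<bar>" "(1 - p) * \<bar>f False\<bar> \<le> \<bar>f False\<bar>"
      using p by (auto intro: mult_left_le_one_le)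
    ultimately show "p * f True + (1 - p) * f False \<le> \<bar>f True\<bar> + \<bar>f False\<bar>" by linarith
  qed
  then show ?thesis unfolding upper_exp_def using assms(1) by (rule cSUP_upper2) simp
qed

lemma test_supermartingale_mono:
  assumes "\<And>s. \<Phi> s \<noteq> {}" "\<And>s. \<Phi> s \<subseteq> \<Psi> s" "\<And>s. \<Psi> s \<subseteq> {0..1}" "test_supermartingale \<Psi> T"
  shows "test_supermartingale \<Phi> T"
proof -
  have "upper_exp (\<Phi> s) (\<lambda>x. T (s @ [x]) - T s) \<le> 0" for s
  proof (rule upper_exp_nonpos)
    fix p assume "p \<in> \<Phi> s"
    then have "p * (T (s @ [True]) - T s) + (1 - p) * (T (s @ [False]) - T s)
        \<le> upper_exp (\<Psi> s) (\<lambda>x. T (s @ [x]) - T s)"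
      using assms(2,3) by (intro expectation_le_upper_exp) auto
    also have "\<dots> \<le> 0" using assms(4) unfolding test_supermartingale_def by blast
    finally show "p * (T (s @ [True]) - T s) + (1 - p) * (T (s @ [False]) - T s) \<le> 0" .
  qed (rule assms(1))
  then show ?thesis using assms(4) unfolding test_supermartingale_def by blast
qed

lemma mlrandom_mono:
  assumes "\<And>s. \<Phi> s \<noteq> {}" "\<And>s. \<Phi> s \<subseteq> \<Psi> s" "\<And>s. \<Psi> s \<subseteq> {0..1}" "mlrandom \<Phi> \<omega>"
  shows "mlrandom \<Psi> \<omega>"
proof -
  have "test_supermartingale \<Phi> T" if "test_supermartingale \<Psi> T" for T
    using assms(1-3) that by (rule test_supermartingale_mono)
  then show ?thesis using assms(4) unfolding mlrandom_def by blast
qed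

lemma prefix_Suc: "prefix \<omega> (Suc n) = prefix \<omega> n @ [\<omega> n]"
  by (simp add: prefix_def)

lemma limsup_ereal_eq_PInf_iff:
  "limsup (\<lambda>n. ereal (X n)) = \<infinity> \<longleftrightarrow> (\<forall>B. \<exists>\<^sub>F n in sequentially. B < X n)"
proof
  assume "limsup (\<lambda>n. ereal (X n)) = \<infinity>"
  show "\<forall>B. \<exists>\<^sub>F n in sequentially. B < X n"
  proof (rule allI, rule ccontr)
    fix B assume "\<not> (\<exists>\<^sub>F n in sequentially. B < X n)"
    then have "\<forall>\<^sub>F n in sequentially. ereal (X n) \<le> ereal B"
      by (simp add: frequently_def not_less)
    then have "limsup (\<lambda>n. ereal (X n)) \<le> ereal B" by (rule Limsup_bounded)
    with \<open>limsup (\<lambda>n. ereal (X n)) = \<infinity>\<close> show False by simp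
  qed
next
  assume unbounded: "\<forall>B. \<exists>\<^sub>F n in sequentially. B < X n"
  show "limsup (\<lambda>n. ereal (X n)) = \<infinity>"
  proof (rule ccontr)
    assume "limsup (\<lambda>n. ereal (X n)) \<noteq> \<infinity>"
    then obtain B :: nat where "limsup (\<lambda>n. ereal (X n)) < ereal (real B)"
      using less_PInf_Ex_of_nat by blast
    then have "\<forall>\<^sub>F n in sequentially. X n < real B" using Limsup_lessD by fastforce
    with unbounded have "\<exists>\<^sub>F n in sequentially. real B < X n \<and> X n < real B"
      by (auto intro: frequently_eventually_frequently)
    then have "\<exists>\<^sub>F n in sequentially. False" by (rule frequently_elim1) linarith
    then show False by simp
  qed
qed

lemma mlrandom_eventually_bounded:
  assumes "mlrandom \<Phi> \<omega>" "lower_semicomputable T" "test_supermartingale \<Phi> T"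
  obtains B where "\<forall>\<^sub>F n in sequentially. T (prefix \<omega> n) \<le> B"
  using assms unfolding mlrandom_def limsup_ereal_eq_PInf_iff frequently_def by (auto simp: not_less)

definition forecast_liminf :: "(sit \<Rightarrow> real set) \<Rightarrow> path \<Rightarrow> real" where
  "forecast_liminf \<phi> \<omega> = real_of_ereal (liminf (\<lambda>n. ereal (lower_fc \<phi> (prefix \<omega> n))))"

definition forecast_limsup :: "(sit \<Rightarrow> real set) \<Rightarrow> path \<Rightarrow> real" where
  "forecast_limsup \<phi> \<omega> = real_of_ereal (limsup (\<lambda>n. ereal (lower_fc \<phi> (prefix \<omega> n))))"

lemma Liminf_lessD: "Liminf F f < y \<Longrightarrow> \<exists>\<^sub>F x in F. f x < y"
  for f :: "_ \<Rightarrow> 'a :: complete_linorder"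
  using le_Liminf_iff[of y F f] by (auto simp: frequently_def not_less elim: eventually_mono)

lemma less_LimsupD: "y < Limsup F f \<Longrightarrow> \<exists>\<^sub>F x in F. y < f x"
  for f :: "_ \<Rightarrow> 'a :: complete_linorder"
  using Limsup_le_iff[of F f y] by (auto simp: frequently_def not_less elim: eventually_mono)

lemma forecast_limits:
  assumes "forecasting_system \<phi>"
  shows "liminf (\<lambda>n. ereal (lower_fc \<phi> (prefix \<omega> n))) = ereal (forecast_liminf \<phi> \<omega>)"
    and "limsup (\<lambda>n. ereal (lower_fc \<phi> (prefix \<omega> n))) = ereal (forecast_limsup \<phi> \<omega>)"
    and "0 \<le> forecast_liminf \<phi> \<omega>" "forecast_liminf \<phi> \<omega> \<le> forecast_limsup \<phi> \<omega>"
      "forecast_limsup \<phi> \<omega> \<le> 1"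
proof -
  let ?x = "\<lambda>n. ereal (lower_fc \<phi> (prefix \<omega> n))"
  have "lower_fc \<phi> s \<in> {0..1}" for s using forecasting_systemD[OF assms] by blast
  then have "0 \<le> liminf ?x" "limsup ?x \<le> 1"
    by (auto intro: Liminf_bounded Limsup_bounded)
  moreover have "liminf ?x \<le> limsup ?x" by (rule Liminf_le_Limsup) simp
  ultimately have li: "liminf ?x = ereal (forecast_liminf \<phi> \<omega>)"
    and ls: "limsup ?x = ereal (forecast_limsup \<phi> \<omega>)"
    unfolding forecast_liminf_def forecast_limsup_def by (auto intro!: ereal_real'[symmetric])
  show "liminf ?x = ereal (forecast_liminf \<phi> \<omega>)" "limsup ?x = ereal (forecast_limsup \<phi> \<omega>)"
    by (fact li ls)+
  show "0 \<le> forecast_liminf \<phi> \<omega>" "forecast_liminf \<phi> \<omega> \<le> forecast_limsup \<phi> \<omega>"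
    "forecast_limsup \<phi> \<omega> \<le> 1"
    using \<open>0 \<le> liminf ?x\<close> \<open>limsup ?x \<le> 1\<close> \<open>liminf ?x \<le> limsup ?x\<close> unfolding li ls by auto
qed

section \<open>Betting strategies\<close>

definition bet_capital :: "(sit \<Rightarrow> bool) \<Rightarrow> (bool \<Rightarrow> rat) \<Rightarrow> sit \<Rightarrow> rat" where
  "bet_capital bet u t = (\<Prod>m<length t. if bet (take m t) then u (t ! m) else 1)"

lemma bet_capital_Nil [simp]: "bet_capital bet u [] = 1"
  by (simp add: bet_capital_def)

lemma bet_capital_snoc:
  "bet_capital bet u (t @ [b]) = bet_capital bet u t * (if bet t then u b else 1)"
proof -
  have "(\<Prod>m<length t. if bet (take m (t @ [b])) then u ((t @ [b]) ! m) else 1) = bet_capital bet u t"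
    unfolding bet_capital_def by (rule prod.cong) (auto simp: nth_append)
  then show ?thesis unfolding bet_capital_def by (simp add: nth_append)
qed

lemma bet_capital_nonneg: "(\<And>b. 0 \<le> u b) \<Longrightarrow> 0 \<le> bet_capital bet u t"
  unfolding bet_capital_def by (intro prod_nonneg) auto

lemma test_supermartingale_bet_capital:
  assumes "\<And>b. 0 \<le> u b" "\<And>s. \<Phi> s \<noteq> {}"
    and "\<And>s p. bet s \<Longrightarrow> p \<in> \<Phi> s \<Longrightarrow> p * of_rat (u True) + (1 - p) * of_rat (u False) \<le> 1"
  shows "test_supermartingale \<Phi> (\<lambda>s. of_rat (bet_capital bet u s))"
  unfolding test_supermartingale_def
proof (intro conjI allI upper_exp_nonpos assms(2))
  fix s p assume p: "p \<in> \<Phi> s"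
  define C where "C = real_of_rat (bet_capital bet u s)"
  have "0 \<le> C" unfolding C_def using bet_capital_nonneg[OF assms(1)] by simp
  then have "C * (p * of_rat (u True) + (1 - p) * of_rat (u False) - 1) \<le> 0" if "bet s"
    using assms(3)[OF that p] by (simp add: mult_nonneg_nonpos)
  then show "p * (of_rat (bet_capital bet u (s @ [True])) - of_rat (bet_capital bet u s)) +
      (1 - p) * (of_rat (bet_capital bet u (s @ [False])) - of_rat (bet_capital bet u s)) \<le> (0::real)"
    by (cases "bet s") (auto simp: bet_capital_snoc of_rat_mult C_def algebra_simps)
qed (use bet_capital_nonneg[OF assms(1)] in simp_all)

lemma recursive_sn_rat_bet_capital:
  assumes "decidable_sit bet"
  shows "recursive_sn_rat (\<lambda>t n. bet_capital bet u t)"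
proof -
  define factor where "factor c i =
      (if bet (sit_decode (enc_take i c)) then if enc_nth c i = 0 then rat_encode (u False) else rat_encode (u True)
       else rat_encode 1)" for c i
  have "recursive_pred (Suc (Suc 2)) (\<lambda>ys. bet (sit_decode (enc_take (ys ! 0) (ys ! 2))))"
    using assms unfolding decidable_sit_def
    by (rule recursive_pred_compose1[where P="\<lambda>c. bet (sit_decode c)"]) (auto intro!: recursive_intros)
  then have "recursive_fn (Suc (Suc 2)) (\<lambda>ys. enc_rat_mult (ys ! 1) (factor (ys ! 2) (ys ! 0)))"
    unfolding factor_def by (intro recursive_intros) simp_all
  then have "recursive_fn 2 (\<lambda>xs. rec_nat (rat_encode 1) (\<lambda>i y. enc_rat_mult y (factor (xs ! 0) i))
      (enc_length (xs ! 0)))"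
    by (rule recursive_fn_rec_nat[OF recursive_fn_const]) (auto intro!: recursive_intros)
  moreover have "rec_nat (rat_encode 1) (\<lambda>i y. enc_rat_mult y (factor (sit_encode d) i)) m =
      rat_encode (\<Prod>i<m. if bet (take i d) then u (d ! i) else 1)" if "m \<le> length d" for d m
    using that
    by (induction m) (auto simp: factor_def enc_take_sit_encode enc_nth_sit_encode enc_rat_mult_rat_encode)
  ultimately show ?thesis
    by (intro recursive_sn_ratI) (auto simp: enc_length_sit_encode bet_capital_def)
qed

lemma lower_semicomputable_bet_capital:
  "decidable_sit bet \<Longrightarrow> lower_semicomputable (\<lambda>s. of_rat (bet_capital bet u s))"
  unfolding lower_semicomputable_def
  by (intro exI[of _ "\<lambda>t n. bet_capital bet u t"]) (simp add: recursive_sn_rat_bet_capital)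

section \<open>Forecasts that are frequently separated\<close>

lemma unbounded_if_frequent_growth:
  fixes X :: "nat \<Rightarrow> real"
  assumes "incseq X" "0 < X 0" "0 < \<gamma>" and grow: "\<exists>\<^sub>F n in sequentially. (1 + \<gamma>) * X n \<le> X (Suc n)"
  shows "\<exists>n. B < X n"
proof -
  have "\<exists>n. (1 + \<gamma>) ^ K * X 0 \<le> X n" for K
  proof (induction K)
    case (Suc K)
    then obtain n where n: "(1 + \<gamma>) ^ K * X 0 \<le> X n" by blast
    obtain m where "n \<le> m" "(1 + \<gamma>) * X m \<le> X (Suc m)"
      using grow unfolding frequently_sequentially by blast
    have "(1 + \<gamma>) ^ Suc K * X 0 = (1 + \<gamma>) * ((1 + \<gamma>) ^ K * X 0)" by simp
    also have "\<dots> \<le> (1 + \<gamma>) * X m"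
      using n \<open>incseq X\<close>[THEN incseqD, OF \<open>n \<le> m\<close>] \<open>0 < \<gamma>\<close> by (intro mult_left_mono) auto
    also have "\<dots> \<le> X (Suc m)" by fact
    finally show ?case by blast
  qed auto
  moreover obtain K where "B / X 0 < (1 + \<gamma>) ^ K"
    using real_arch_pow[of "1 + \<gamma>"] \<open>0 < \<gamma>\<close> by auto
  ultimately show ?thesis using \<open>0 < X 0\<close> by (metis divide_less_eq order_less_le_trans)
qed

text \<open>The two linear terms of the product add up to \<open>2 e\<^sup>2\<close>, and the quadratic term is at least \<open>- e\<^sup>2\<close>.\<close>
lemma bet_factors_product_ge:
  fixes \<sigma> \<kappa> r b :: "'a :: linordered_field"
  assumes "\<sigma> * \<sigma> = 1" "\<kappa> \<in> {0..1}" "r \<in> {0..1}" "b = 0 \<or> b = 1"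
  defines "e \<equiv> \<sigma> * (\<kappa> - r) / 2"
  shows "1 + e * e \<le> (1 + e * \<sigma> * (\<kappa> - b)) * (1 + e * \<sigma> * (b - r))"
proof -
  have "(1 + e * \<sigma> * (\<kappa> - b)) * (1 + e * \<sigma> * (b - r)) =
      1 + e * \<sigma> * (\<kappa> - r) + e * e * (\<sigma> * \<sigma>) * ((\<kappa> - b) * (b - r))"
    by (simp add: algebra_simps)
  moreover have "e * \<sigma> * (\<kappa> - r) = 2 * (e * e)"
    unfolding e_def using assms(1) by (simp add: field_simps)
  moreover have "-1 \<le> (\<kappa> - b) * (b - r)"
    using assms(2-4) mult_le_one[of \<kappa> r] mult_le_one[of "1 - \<kappa>" "1 - r"] by (auto simp: algebra_simps)
  then have "- (e * e) \<le> e * e * ((\<kappa> - b) * (b - r))"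
    using mult_left_mono[of "-1" "(\<kappa> - b) * (b - r)" "e * e"] by simp
  ultimately show ?thesis using assms(1) by simp
qed

lemma mlrandom_bet_capital_bounded:
  assumes "mlrandom \<Phi> \<omega>" "decidable_sit bet" "\<And>b. 0 \<le> u b" "\<And>s. \<Phi> s \<noteq> {}"
    and "\<And>s p. bet s \<Longrightarrow> p \<in> \<Phi> s \<Longrightarrow> p * of_rat (u True) + (1 - p) * of_rat (u False) \<le> 1"
  obtains B :: real where "\<forall>\<^sub>F n in sequentially. of_rat (bet_capital bet u (prefix \<omega> n)) \<le> B"
  using mlrandom_eventually_bounded[OF assms(1) lower_semicomputable_bet_capital[OF assms(2)]
      test_supermartingale_bet_capital[OF assms(3-5)]] .

lemma bet_capital_product_unbounded:
  fixes uA uB :: "bool \<Rightarrow> rat" and B :: real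
  assumes "\<And>b. 0 \<le> uA b" "\<And>b. 0 \<le> uB b" "0 < \<gamma>" "\<And>b. 1 + \<gamma> \<le> uA b * uB b"
    and "\<exists>\<^sub>F n in sequentially. bet (prefix \<omega> n)"
  shows "\<exists>\<^sub>F n in sequentially.
    B < of_rat (bet_capital bet uA (prefix \<omega> n)) * of_rat (bet_capital bet uB (prefix \<omega> n))"
proof -
  define X :: "nat \<Rightarrow> real"
    where "X n = of_rat (bet_capital bet uA (prefix \<omega> n) * bet_capital bet uB (prefix \<omega> n))" for n
  have X_Suc: "X (Suc n) = X n * (if bet (prefix \<omega> n) then of_rat (uA (\<omega> n) * uB (\<omega> n)) else 1)" for n
    by (simp add: X_def prefix_Suc bet_capital_snoc of_rat_mult)
  have X_nonneg: "0 \<le> X n" for n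
    unfolding X_def using bet_capital_nonneg assms(1,2) by (simp add: zero_le_of_rat_iff)
  have factor: "1 + real_of_rat \<gamma> \<le> of_rat (uA b * uB b)" for b
    using assms(4) by (metis of_rat_1 of_rat_add of_rat_less_eq)
  have "1 \<le> uA b * uB b" for b using assms(3) assms(4)[of b] by linarith
  then have "1 \<le> (if bet (prefix \<omega> n) then real_of_rat (uA (\<omega> n) * uB (\<omega> n)) else 1)" for n
    by simp
  from mult_left_mono[OF this X_nonneg] have "incseq X"
    by (intro incseq_SucI) (simp add: X_Suc)
  moreover have "\<exists>\<^sub>F n in sequentially. (1 + of_rat \<gamma>) * X n \<le> X (Suc n)"
    using assms(5) by (rule frequently_elim1) (use factor X_nonneg in \<open>simp add: X_Suc mult_left_mono mult.commute\<close>)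
  moreover have "X 0 = 1" by (simp add: X_def prefix_def)
  ultimately obtain n where "B < X n"
    using unbounded_if_frequent_growth[of X "of_rat \<gamma>"] assms(3) by auto
  have "\<forall>\<^sub>F m in sequentially. B < X m"
    using eventually_ge_at_top[of n]
  proof eventually_elim
    case (elim m)
    with \<open>B < X n\<close> \<open>incseq X\<close>[THEN incseqD, of n m] show ?case by linarith
  qed
  then show ?thesis unfolding X_def of_rat_mult by (simp add: eventually_frequently)
qed

text \<open>Gambler \<open>A\<close> bets against \<open>\<Phi>\<close> with multipliers \<open>1 + e \<sigma> (\<kappa> - b)\<close> and gambler \<open>B\<close> against
  \<open>\<Psi>\<close> with multipliers \<open>1 + e \<sigma> (b - r)\<close>, where \<open>b\<close> is the outcome and \<open>e = \<sigma> (\<kappa> - r) / 2\<close>.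
  Both capitals are test supermartingales, but their product grows by a factor \<open>1 + e\<^sup>2\<close> at
  every bet, so one of them is unbounded along \<open>\<omega>\<close>.\<close>
lemma separated_forecasts_not_both_mlrandom:
  fixes \<sigma> \<kappa> r :: rat
  assumes \<sigma>: "\<sigma> = 1 \<or> \<sigma> = -1" and \<kappa>r: "\<kappa> \<in> {0..1}" "r \<in> {0..1}" "0 < \<sigma> * (\<kappa> - r)"
    and bet: "decidable_sit bet" "\<exists>\<^sub>F n in sequentially. bet (prefix \<omega> n)"
    and \<Phi>: "\<And>s. \<Phi> s \<noteq> {}" "\<And>s p. p \<in> \<Phi> s \<Longrightarrow> of_rat (\<sigma> * \<kappa>) \<le> of_rat \<sigma> * p"
    and \<Psi>: "\<And>s. \<Psi> s \<noteq> {}" "\<And>s p. bet s \<Longrightarrow> p \<in> \<Psi> s \<Longrightarrow> of_rat \<sigma> * p \<le> of_rat (\<sigma> * r)"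
  shows "\<not> (mlrandom \<Phi> \<omega> \<and> mlrandom \<Psi> \<omega>)"
proof
  assume ml: "mlrandom \<Phi> \<omega> \<and> mlrandom \<Psi> \<omega>"
  define e where "e = \<sigma> * (\<kappa> - r) / 2"
  define bit :: "bool \<Rightarrow> rat" where "bit b = (if b then 1 else 0)" for b
  define uA where "uA b = 1 + e * \<sigma> * (\<kappa> - bit b)" for b
  define uB where "uB b = 1 + e * \<sigma> * (bit b - r)" for b
  have e: "0 < e" "e \<le> 1/2" using \<kappa>r \<sigma> by (auto simp: e_def)
  have bound: "\<bar>e * \<sigma> * (\<kappa> - bit b)\<bar> \<le> e" "\<bar>e * \<sigma> * (bit b - r)\<bar> \<le> e" for b
    using \<kappa>r \<sigma> e mult_left_le[of "\<bar>\<kappa> - bit b\<bar>" e] mult_left_le[of "\<bar>bit b - r\<bar>" e]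
    by (auto simp: abs_mult bit_def)
  have u_nonneg: "0 \<le> uA b" "0 \<le> uB b" for b
    using bound[of b] e unfolding uA_def uB_def by (simp_all only: abs_le_iff) linarith+
  obtain BA :: real where BA: "\<forall>\<^sub>F n in sequentially. of_rat (bet_capital bet uA (prefix \<omega> n)) \<le> BA"
  proof (rule mlrandom_bet_capital_bounded[OF conjunct1[OF ml] bet(1) u_nonneg(1) \<Phi>(1)])
    fix s p assume "p \<in> \<Phi> s"
    have "p * of_rat (uA True) + (1 - p) * of_rat (uA False) = 1 + of_rat e * (of_rat (\<sigma> * \<kappa>) - of_rat \<sigma> * p)"
      by (simp add: uA_def bit_def of_rat_add of_rat_mult of_rat_diff algebra_simps)
    then show "p * of_rat (uA True) + (1 - p) * of_rat (uA False) \<le> 1"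
      using \<Phi>(2)[OF \<open>p \<in> \<Phi> s\<close>] e by (simp add: mult_nonneg_nonpos)
  qed
  obtain BB :: real where BB: "\<forall>\<^sub>F n in sequentially. of_rat (bet_capital bet uB (prefix \<omega> n)) \<le> BB"
  proof (rule mlrandom_bet_capital_bounded[OF conjunct2[OF ml] bet(1) u_nonneg(2) \<Psi>(1)])
    fix s p assume "bet s" "p \<in> \<Psi> s"
    have "p * of_rat (uB True) + (1 - p) * of_rat (uB False) = 1 + of_rat e * (of_rat \<sigma> * p - of_rat (\<sigma> * r))"
      by (simp add: uB_def bit_def of_rat_add of_rat_mult of_rat_diff algebra_simps)
    then show "p * of_rat (uB True) + (1 - p) * of_rat (uB False) \<le> 1"
      using \<Psi>(2)[OF \<open>bet s\<close> \<open>p \<in> \<Psi> s\<close>] e by (simp add: mult_nonneg_nonpos)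
  qed
  have "1 + e * e \<le> uA b * uB b" for b
    using bet_factors_product_ge[of \<sigma> \<kappa> r "bit b"] \<sigma> \<kappa>r by (auto simp: uA_def uB_def bit_def e_def)
  then have "\<exists>\<^sub>F n in sequentially. max BA 0 * max BB 0 <
      of_rat (bet_capital bet uA (prefix \<omega> n)) * of_rat (bet_capital bet uB (prefix \<omega> n))"
    using u_nonneg e bet(2) by (intro bet_capital_product_unbounded[where \<gamma>="e * e"]) auto
  moreover have "\<forall>\<^sub>F n in sequentially.
      of_rat (bet_capital bet uA (prefix \<omega> n)) * of_rat (bet_capital bet uB (prefix \<omega> n)) \<le> max BA 0 * max BB 0"
    using BA BB by eventually_elim (intro mult_mono; use bet_capital_nonneg u_nonneg in \<open>auto simp: zero_le_of_rat_iff\<close>)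
  ultimately show False by (auto dest: frequently_eventually_frequently simp: not_le[symmetric])
qed

lemma computable_fc_approx:
  assumes "computable_fc \<phi>"
  obtains q where "recursive_sn_rat q" "\<And>s n. \<bar>lower_fc \<phi> s - of_rat (q s n)\<bar> < (1/2) ^ n"
  using assms unfolding computable_fc_def computable_real_def by blast

lemma separating_rationals:
  fixes \<sigma> :: rat and a b :: real
  assumes \<sigma>: "\<sigma> = 1 \<or> \<sigma> = -1" and ab: "a \<in> {0..1}" "b \<in> {0..1}" "of_rat \<sigma> * a < of_rat \<sigma> * b"
  obtains \<kappa> r th :: rat and k :: nat
  where "\<kappa> \<in> {0..1}" "r \<in> {0..1}" "0 < \<sigma> * (\<kappa> - r)" "of_rat (\<sigma> * \<kappa>) < of_rat \<sigma> * b"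
    "of_rat \<sigma> * a + (1/2) ^ k < of_rat (\<sigma> * th)" "real_of_rat (\<sigma> * th) + (1/2) ^ k = of_rat (\<sigma> * r)"
proof -
  let ?s = "real_of_rat \<sigma>"
  define \<delta> where "\<delta> = (?s * b - ?s * a) / 4"
  have "0 < \<delta>" and b: "?s * b = ?s * a + 4 * \<delta>" using ab unfolding \<delta>_def by (simp_all add: field_simps)
  obtain k where k: "(1/2::real) ^ k < \<delta>"
    using real_arch_pow_inv[OF \<open>0 < \<delta>\<close>, of "1/2"] by auto
  obtain th' :: rat where th': "?s * a + \<delta> < of_rat th'" "of_rat th' < ?s * a + 2 * \<delta>"
    using of_rat_dense[of "?s * a + \<delta>" "?s * a + 2 * \<delta>"] \<open>0 < \<delta>\<close> by auto
  obtain \<kappa>' :: rat where \<kappa>': "?s * a + 3 * \<delta> < of_rat \<kappa>'" "of_rat \<kappa>' < ?s * b"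
    using of_rat_dense[of "?s * a + 3 * \<delta>" "?s * b"] \<open>0 < \<delta>\<close> b by auto
  define th where "th = \<sigma> * th'"
  define r where "r = th + \<sigma> * (1/2) ^ k"
  define \<kappa> where "\<kappa> = \<sigma> * \<kappa>'"
  have \<sigma>\<sigma>: "\<sigma> * (\<sigma> * x) = x" for x using \<sigma> by auto
  have th: "of_rat (\<sigma> * th) = real_of_rat th'"
    and r: "of_rat (\<sigma> * r) = real_of_rat th' + (1/2) ^ k"
    and \<kappa>: "of_rat (\<sigma> * \<kappa>) = real_of_rat \<kappa>'"
    by (simp_all add: th_def r_def \<kappa>_def \<sigma>\<sigma> distrib_left of_rat_add of_rat_power of_rat_divide)
  have between: "x \<in> {0..1}" if "?s * a < ?s * x" "?s * x < ?s * b" for x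
    using that \<sigma> ab by auto
  have "?s * of_rat \<kappa> = of_rat \<kappa>'" "?s * of_rat r = of_rat th' + (1/2) ^ k"
    using \<kappa> r by (simp_all add: of_rat_mult)
  moreover have "0 < (1/2::real) ^ k" by simp
  ultimately have "?s * a < ?s * of_rat \<kappa>" "?s * of_rat \<kappa> < ?s * b"
    "?s * a < ?s * of_rat r" "?s * of_rat r < ?s * b"
    using th' \<kappa>' k b by linarith+
  then have "of_rat \<kappa> \<in> {0..1::real}" "of_rat r \<in> {0..1::real}"
    using between by blast+
  show ?thesis
  proof (rule that)
    show "\<kappa> \<in> {0..1}" "r \<in> {0..1}" using \<open>of_rat \<kappa> \<in> {0..1::real}\<close> \<open>of_rat r \<in> {0..1::real}\<close> by auto
    have "real_of_rat (\<sigma> * r) < of_rat (\<sigma> * \<kappa>)" using \<kappa> r th' \<kappa>' k by linarith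
    then show "0 < \<sigma> * (\<kappa> - r)" by (simp add: of_rat_less right_diff_distrib)
    show "real_of_rat (\<sigma> * \<kappa>) < ?s * b" using \<kappa> \<kappa>' by simp
    show "?s * a + (1/2) ^ k < of_rat (\<sigma> * th)" using th th' k by linarith
    show "real_of_rat (\<sigma> * th) + (1/2) ^ k = of_rat (\<sigma> * r)" using th r by simp
  qed
qed

text \<open>The gamblers bet whenever a rational approximation of the forecast of \<open>\<phi>\<close> is beyond the
  threshold \<open>th\<close>.\<close>
lemma not_mlrandom_if_frequently_separated:
  fixes \<sigma> :: rat
  assumes \<phi>: "forecasting_system \<phi>" "computable_fc \<phi>" "precise_fc \<phi>" "mlrandom \<phi> \<omega>"
    and \<sigma>: "\<sigma> = 1 \<or> \<sigma> = -1" and ab: "a \<in> {0..1}" "b \<in> {0..1}" "of_rat \<sigma> * a < of_rat \<sigma> * b"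
    and freq: "\<exists>\<^sub>F n in sequentially. of_rat \<sigma> * lower_fc \<phi> (prefix \<omega> n) \<le> of_rat \<sigma> * a"
    and J: "J \<noteq> {}" "\<And>p. p \<in> J \<Longrightarrow> of_rat \<sigma> * b \<le> of_rat \<sigma> * p"
  shows "\<not> mlrandom (\<lambda>_. J) \<omega>"
proof -
  obtain q where q: "recursive_sn_rat q" "\<And>s n. \<bar>lower_fc \<phi> s - of_rat (q s n)\<bar> < (1/2) ^ n"
    using computable_fc_approx[OF \<phi>(2)] by blast
  obtain \<kappa> r th k where \<kappa>r: "\<kappa> \<in> {0..1}" "r \<in> {0..1}" "0 < \<sigma> * (\<kappa> - r)"
    and \<kappa>: "of_rat (\<sigma> * \<kappa>) < of_rat \<sigma> * b"
    and th: "of_rat \<sigma> * a + (1/2) ^ k < of_rat (\<sigma> * th)" "real_of_rat (\<sigma> * th) + (1/2) ^ k = of_rat (\<sigma> * r)"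
    using separating_rationals[OF \<sigma> ab] .
  let ?s = "real_of_rat \<sigma>"
  have \<sigma>_diff: "?s * x - ?s * y \<le> \<bar>x - y\<bar>" for x y
    using \<sigma> by auto
  define bet where "bet t \<longleftrightarrow> \<sigma> * q t k \<le> \<sigma> * th" for t
  have "\<not> (mlrandom (\<lambda>_. J) \<omega> \<and> mlrandom \<phi> \<omega>)"
  proof (rule separated_forecasts_not_both_mlrandom[OF \<sigma> \<kappa>r])
    show "decidable_sit bet"
      unfolding bet_def by (rule decidable_sit_mult_le(1)[OF q(1)])
    show "\<exists>\<^sub>F n in sequentially. bet (prefix \<omega> n)"
      using freq
    proof (rule frequently_elim1)
      fix n assume "?s * lower_fc \<phi> (prefix \<omega> n) \<le> ?s * a"
      then have "of_rat (\<sigma> * q (prefix \<omega> n) k) < real_of_rat (\<sigma> * th)"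
        using \<sigma>_diff[of "of_rat (q (prefix \<omega> n) k)" "lower_fc \<phi> (prefix \<omega> n)"]
          q(2)[of "prefix \<omega> n" k] th by (simp add: of_rat_mult abs_minus_commute)
      then show "bet (prefix \<omega> n)" unfolding bet_def of_rat_less by simp
    qed
    show "of_rat (\<sigma> * \<kappa>) \<le> ?s * p" if "p \<in> J" for p
      using J(2)[OF that] \<kappa> by simp
    show "?s * p \<le> of_rat (\<sigma> * r)" if "bet t" "p \<in> \<phi> t" for t p
    proof -
      have "p = lower_fc \<phi> t" using that(2) precise_fc_singleton[OF \<phi>(1,3)] by blast
      then show ?thesis using that(1) \<sigma>_diff[of p "of_rat (q t k)"] q(2)[of t k] th
        unfolding bet_def of_rat_less_eq[symmetric, where 'a=real] by (simp add: of_rat_mult)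
    qed
  qed (use J(1) forecasting_systemD(1)[OF \<phi>(1)] in auto)
  then show ?thesis using \<phi>(4) by blast
qed

lemma mlrandom_interval_bounds_forecast_limits:
  assumes \<phi>: "forecasting_system \<phi>" "computable_fc \<phi>" "precise_fc \<phi>" "mlrandom \<phi> \<omega>"
    and cd: "0 \<le> c" "c \<le> d" "d \<le> 1" "mlrandom (\<lambda>_. {c..d}) \<omega>"
  shows "c \<le> forecast_liminf \<phi> \<omega> \<and> forecast_limsup \<phi> \<omega> \<le> d"
proof
  let ?x = "\<lambda>n. lower_fc \<phi> (prefix \<omega> n)"
  note lim = forecast_limits[OF \<phi>(1), of \<omega>]
  show "c \<le> forecast_liminf \<phi> \<omega>"
  proof (rule ccontr)
    assume "\<not> c \<le> forecast_liminf \<phi> \<omega>"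
    then have "liminf (\<lambda>n. ereal (?x n)) < ereal ((forecast_liminf \<phi> \<omega> + c) / 2)"
      unfolding lim(1) by simp
    then have "\<exists>\<^sub>F n in sequentially. of_rat 1 * ?x n \<le> of_rat 1 * ((forecast_liminf \<phi> \<omega> + c) / 2)"
      by (auto dest!: Liminf_lessD elim: frequently_elim1)
    from not_mlrandom_if_frequently_separated[OF \<phi> _ _ _ _ this, of c "{c..d}"]
    show False using cd lim(3) \<open>\<not> c \<le> forecast_liminf \<phi> \<omega>\<close> by auto
  qed
  show "forecast_limsup \<phi> \<omega> \<le> d"
  proof (rule ccontr)
    assume "\<not> forecast_limsup \<phi> \<omega> \<le> d"
    then have "ereal ((forecast_limsup \<phi> \<omega> + d) / 2) < limsup (\<lambda>n. ereal (?x n))"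
      unfolding lim(2) by simp
    then have "\<exists>\<^sub>F n in sequentially. of_rat (-1) * ?x n \<le> of_rat (-1) * ((forecast_limsup \<phi> \<omega> + d) / 2)"
      by (auto dest!: less_LimsupD elim: frequently_elim1)
    from not_mlrandom_if_frequently_separated[OF \<phi> _ _ _ _ this, of d "{c..d}"]
    show False using cd lim(5) \<open>\<not> forecast_limsup \<phi> \<omega> \<le> d\<close> by auto
  qed
qed

section \<open>Stopped supermartingales\<close>

definition stop_time :: "(sit \<Rightarrow> bool) \<Rightarrow> nat \<Rightarrow> sit \<Rightarrow> nat" where
  "stop_time P N s = (LEAST m. N \<le> m \<and> (length s \<le> m \<or> \<not> P (take m s)))"

definition stopped :: "(sit \<Rightarrow> bool) \<Rightarrow> nat \<Rightarrow> sit \<Rightarrow> sit" where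
  "stopped P N s = take (stop_time P N s) s"

lemma stop_time_eqI:
  assumes "N \<le> j" "length s \<le> j \<or> \<not> P (take j s)"
    and "\<And>m. N \<le> m \<Longrightarrow> m < j \<Longrightarrow> m < length s \<and> P (take m s)"
  shows "stop_time P N s = j"
  unfolding stop_time_def using assms by (intro Least_equality) (auto simp: not_le[symmetric])

lemma stop_time_bounds:
  assumes "N \<le> length s"
  shows "N \<le> stop_time P N s" "stop_time P N s \<le> length s"
    and "\<And>m. N \<le> m \<Longrightarrow> m < stop_time P N s \<Longrightarrow> P (take m s)"
    and "stop_time P N s < length s \<Longrightarrow> \<not> P (take (stop_time P N s) s)"
proof -
  let ?Q = "\<lambda>m. N \<le> m \<and> (length s \<le> m \<or> \<not> P (take m s))"
  have "?Q (length s)" using assms by simp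
  then have "?Q (stop_time P N s)" "stop_time P N s \<le> length s"
    unfolding stop_time_def by (rule LeastI, rule Least_le)
  moreover have "\<not> ?Q m" if "m < stop_time P N s" for m
    using that unfolding stop_time_def by (rule not_less_Least)
  ultimately show "N \<le> stop_time P N s" "stop_time P N s \<le> length s"
    "\<And>m. N \<le> m \<Longrightarrow> m < stop_time P N s \<Longrightarrow> P (take m s)"
    "stop_time P N s < length s \<Longrightarrow> \<not> P (take (stop_time P N s) s)"
    by force+
qed

lemma stopped_eq_self:
  assumes "N \<le> length s" "\<And>m. N \<le> m \<Longrightarrow> m < length s \<Longrightarrow> P (take m s)"
  shows "stopped P N s = s"
  unfolding stopped_def using assms by (subst stop_time_eqI[of N "length s"]) auto

lemma stopped_snoc:
  assumes "N \<le> length s"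
  shows "stopped P N (s @ [b]) = (if stopped P N s = s \<and> P s then s @ [b] else stopped P N s)"
proof -
  note st = stop_time_bounds[OF assms, where P=P]
  show ?thesis
  proof (cases "stop_time P N s < length s")
    case True
    have "stop_time P N (s @ [b]) = stop_time P N s"
    proof (rule stop_time_eqI)
      show "length (s @ [b]) \<le> stop_time P N s \<or> \<not> P (take (stop_time P N s) (s @ [b]))"
        using st(4) True by simp
      show "m < length (s @ [b]) \<and> P (take m (s @ [b]))" if "N \<le> m" "m < stop_time P N s" for m
        using st(3)[OF that] that True by simp
    qed (rule st(1))
    moreover have "length (stopped P N s) < length s" using True by (simp add: stopped_def)
    ultimately show ?thesis using True by (auto simp: stopped_def)
  next
    case False
    then have st_eq: "stop_time P N s = length s" using st(2) by simp
    have "stop_time P N (s @ [b]) = (if P s then Suc (length s) else length s)"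
    proof (rule stop_time_eqI)
      show "m < length (s @ [b]) \<and> P (take m (s @ [b]))"
        if "N \<le> m" "m < (if P s then Suc (length s) else length s)" for m
        using st(3)[OF that(1)] that st_eq by (cases "m = length s"; cases "P s") auto
    qed (use assms in auto)
    then show ?thesis using st_eq by (simp add: stopped_def)
  qed
qed

lemma test_supermartingale_stopped:
  assumes \<phi>: "forecasting_system \<phi>" and T: "test_supermartingale \<Psi> T" "\<And>s. \<Psi> s \<subseteq> {0..1}"
    and P: "\<And>s. P s \<Longrightarrow> \<phi> s \<subseteq> \<Psi> s"
    and c: "0 \<le> c" "\<And>s. length s = N \<Longrightarrow> c * T s \<le> 1" and "0 < N"
  shows "test_supermartingale \<phi> (\<lambda>s. if length s < N then 1 else c * T (stopped P N s))"
    (is "test_supermartingale \<phi> ?T")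
  unfolding test_supermartingale_def
proof (intro conjI allI upper_exp_nonpos forecasting_systemD(1)[OF \<phi>])
  show "?T [] = 1" "0 \<le> ?T s" for s
    using \<open>0 < N\<close> c(1) T(1) by (simp_all add: test_supermartingale_def)
  fix s p assume "p \<in> \<phi> s"
  then have p: "0 \<le> p" "p \<le> 1" using forecasting_systemD(2)[OF \<phi>, of s] by auto
  consider "Suc (length s) < N" | "Suc (length s) = N" | "N \<le> length s" by linarith
  then show "p * (?T (s @ [True]) - ?T s) + (1 - p) * (?T (s @ [False]) - ?T s) \<le> 0"
  proof cases
    case 2
    then have "?T (s @ [b]) - ?T s \<le> 0" for b
      using c(2)[of "s @ [b]"] stopped_eq_self[of N "s @ [b]" P] by simp
    then show ?thesis using p by (simp add: add_nonpos_nonpos mult_nonneg_nonpos)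
  next
    case 3
    show ?thesis
    proof (cases "stopped P N s = s \<and> P s")
      case True
      then have "p * (T (s @ [True]) - T s) + (1 - p) * (T (s @ [False]) - T s)
          \<le> upper_exp (\<Psi> s) (\<lambda>x. T (s @ [x]) - T s)"
        using P T(2) \<open>p \<in> \<phi> s\<close> by (intro expectation_le_upper_exp) auto
      also have "\<dots> \<le> 0" using T(1) unfolding test_supermartingale_def by blast
      finally have "p * (T (s @ [True]) - T s) + (1 - p) * (T (s @ [False]) - T s) \<le> 0" .
      from mult_nonneg_nonpos[OF c(1) this] show ?thesis using True 3 by (simp add: stopped_snoc algebra_simps)
    qed (use 3 in \<open>auto simp: stopped_snoc\<close>)
  qed simp
qed

definition enc_stop_time :: "(sit \<Rightarrow> bool) \<Rightarrow> nat \<Rightarrow> nat \<Rightarrow> nat" where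
  "enc_stop_time P N c = (LEAST m. N \<le> m \<and> (enc_length c \<le> m \<or> \<not> P (sit_decode (enc_take m c))))"

lemma enc_stop_time_sit_encode: "enc_stop_time P N (sit_encode s) = stop_time P N s"
proof -
  have "(enc_length (sit_encode s) \<le> m \<or> \<not> P (sit_decode (enc_take m (sit_encode s)))) \<longleftrightarrow>
      (length s \<le> m \<or> \<not> P (take m s))" for m
    by (cases "length s \<le> m") (auto simp: enc_length_sit_encode enc_take_sit_encode)
  then show ?thesis unfolding enc_stop_time_def stop_time_def by simp
qed

lemma recursive_fn_enc_stop_time:
  assumes "decidable_sit P" "recursive_fn k g"
  shows "recursive_fn k (\<lambda>xs. enc_stop_time P N (g xs))"
proof (rule recursive_fn_compose1[OF _ assms(2)])
  have "recursive_pred (Suc 1) (\<lambda>ys. P (sit_decode (enc_take (ys ! 0) (ys ! 1))))"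
    using assms(1) unfolding decidable_sit_def
    by (rule recursive_pred_compose1[where P="\<lambda>c. P (sit_decode c)"]) (auto intro!: recursive_intros)
  moreover have "\<exists>m. N \<le> m \<and> (enc_length c \<le> m \<or> \<not> P (sit_decode (enc_take m c)))" for c
    by (intro exI[of _ "N + enc_length c"]) simp
  ultimately have "recursive_fn 1 (\<lambda>xs. LEAST m. (\<lambda>ys. N \<le> ys ! 0 \<and>
      (enc_length (ys ! 1) \<le> ys ! 0 \<or> \<not> P (sit_decode (enc_take (ys ! 0) (ys ! 1))))) (m # xs))"
    by (intro recursive_fn_Least recursive_intros) simp_all
  then show "recursive_fn 1 (\<lambda>xs. enc_stop_time P N (xs ! 0))"
    by (rule recursive_fn_cong) (simp add: enc_stop_time_def)
qed

lemma lower_semicomputable_stopped: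
  assumes P: "decidable_sit P" and T: "lower_semicomputable T" and "0 \<le> c"
  shows "lower_semicomputable (\<lambda>s. if length s < N then 1 else of_rat c * T (stopped P N s))"
proof -
  obtain qT where qT: "recursive_sn_rat qT" "\<And>d n. qT d n \<le> qT d (Suc n)"
    "\<And>d. (\<lambda>n. real_of_rat (qT d n)) \<longlonglongrightarrow> T d"
    using T unfolding lower_semicomputable_def by blast
  define q where "q d n = (if length d < N then 1 else c * qT (stopped P N d) n)" for d n
  define F where "F xs = (if enc_length (xs ! 0) < N then rat_encode 1
      else enc_rat_mult (rat_encode c)
        (rat_encode (qT (sit_decode (enc_take (enc_stop_time P N (xs ! 0)) (xs ! 0))) (xs ! 1))))" for xs
  have "recursive_sn_rat q"
  proof (rule recursive_sn_ratI[where F=F])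
    show "recursive_fn 2 F" unfolding F_def
      by (intro recursive_intros recursive_sn_ratD[OF qT(1)] recursive_fn_enc_stop_time[OF P]) simp_all
    show "F [sit_encode d, n] = rat_encode (q d n)" for d n
      using stop_time_bounds(2)[of N d P] unfolding F_def
      by (simp add: q_def enc_stop_time_sit_encode enc_length_sit_encode enc_take_sit_encode
          enc_rat_mult_rat_encode stopped_def)
  qed
  moreover have "q d n \<le> q d (Suc n)" for d n
    using qT(2) \<open>0 \<le> c\<close> by (simp add: q_def mult_left_mono)
  moreover have "(\<lambda>n. real_of_rat (q d n)) \<longlonglongrightarrow> (if length d < N then 1 else of_rat c * T (stopped P N d))"
    for d using qT(3) by (simp add: q_def of_rat_mult tendsto_mult_left)
  ultimately show ?thesis unfolding lower_semicomputable_def by blast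
qed

lemma decidable_forecast_region:
  assumes "computable_fc \<phi>" "0 < e"
  obtains pass where "decidable_sit pass"
    and "\<And>t. pass t \<Longrightarrow> l - e \<le> lower_fc \<phi> t \<and> lower_fc \<phi> t \<le> u + e"
    and "\<And>t. l - e / 2 < lower_fc \<phi> t \<Longrightarrow> lower_fc \<phi> t < u + e / 2 \<Longrightarrow> pass t"
proof -
  obtain q where q: "recursive_sn_rat q" "\<And>s n. \<bar>lower_fc \<phi> s - of_rat (q s n)\<bar> < (1/2) ^ n"
    using computable_fc_approx[OF assms(1)] by blast
  obtain k where k: "(1/2::real) ^ k < e / 8"
    using real_arch_pow_inv[of "e / 8" "1/2"] assms(2) by auto
  obtain al :: rat where al: "l - 7 * e / 8 < of_rat al" "of_rat al < l - 5 * e / 8"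
    using of_rat_dense[of "l - 7 * e / 8" "l - 5 * e / 8"] assms(2) by auto
  obtain be :: rat where be: "u + 5 * e / 8 < of_rat be" "of_rat be < u + 7 * e / 8"
    using of_rat_dense[of "u + 5 * e / 8" "u + 7 * e / 8"] assms(2) by auto
  have "decidable_sit (\<lambda>t. al \<le> 1 * q t k \<and> 1 * q t k \<le> be)"
    by (intro decidable_sit_conj decidable_sit_mult_le q(1))
  show ?thesis
  proof (rule that[of "\<lambda>t. al \<le> q t k \<and> q t k \<le> be"])
    show "decidable_sit (\<lambda>t. al \<le> q t k \<and> q t k \<le> be)"
      using \<open>decidable_sit (\<lambda>t. al \<le> 1 * q t k \<and> 1 * q t k \<le> be)\<close> by simp
    show "l - e \<le> lower_fc \<phi> t \<and> lower_fc \<phi> t \<le> u + e" if "al \<le> q t k \<and> q t k \<le> be" for t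
      using that q(2)[of t k] k al be
      unfolding of_rat_less_eq[symmetric, where 'a=real] by (auto simp: abs_less_iff)
    show "al \<le> q t k \<and> q t k \<le> be" if "l - e / 2 < lower_fc \<phi> t" "lower_fc \<phi> t < u + e / 2" for t
      using that q(2)[of t k] k al be
      unfolding of_rat_less_eq[symmetric, where 'a=real] by (auto simp: abs_less_iff)
  qed
qed

lemma eventually_near_forecast_limits:
  assumes "forecasting_system \<phi>" "0 < e"
  shows "\<forall>\<^sub>F n in sequentially. forecast_liminf \<phi> \<omega> - e < lower_fc \<phi> (prefix \<omega> n) \<and>
    lower_fc \<phi> (prefix \<omega> n) < forecast_limsup \<phi> \<omega> + e"
proof -
  have "\<forall>\<^sub>F n in sequentially. ereal (forecast_liminf \<phi> \<omega> - e) < ereal (lower_fc \<phi> (prefix \<omega> n))"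
    using assms(2) by (intro less_LiminfD) (simp add: forecast_limits(1)[OF assms(1)])
  moreover have "\<forall>\<^sub>F n in sequentially. ereal (lower_fc \<phi> (prefix \<omega> n)) < ereal (forecast_limsup \<phi> \<omega> + e)"
    using assms(2) by (intro Limsup_lessD) (simp add: forecast_limits(2)[OF assms(1)])
  ultimately show ?thesis by eventually_elim simp
qed

lemma rat_scaling_le_one:
  fixes T :: "sit \<Rightarrow> real"
  assumes "\<And>s. 0 \<le> T s"
  obtains c :: rat where "0 < c" "\<And>s. length s = N \<Longrightarrow> of_rat c * T s \<le> 1"
proof -
  define M where "M = sum T {s. length s = N}"
  have "finite {s :: sit. length s = N}" using finite_lists_length_eq[of "UNIV :: bool set"] by simp
  then have T_le_M: "T s \<le> M" if "length s = N" for s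
    unfolding M_def using that assms by (intro member_le_sum) auto
  have "0 \<le> M" using T_le_M[of "replicate N True"] assms[of "replicate N True"] by simp
  then obtain c :: rat where c: "0 < c" "real_of_rat c < 1 / (M + 1)"
    using of_rat_dense[of 0 "1 / (M + 1)"] by auto
  have "of_rat c * T s \<le> 1" if "length s = N" for s
  proof -
    have "of_rat c * T s \<le> 1 / (M + 1) * M"
      using c T_le_M[OF that] assms[of s] by (intro mult_mono) auto
    also have "\<dots> \<le> 1" using \<open>0 \<le> M\<close> by (simp add: field_simps)
    finally show ?thesis .
  qed
  with c(1) show ?thesis by (rule that)
qed

lemma limsup_eq_PInf_eventually_scaled:
  assumes "\<forall>\<^sub>F n in sequentially. Y n = c * X n" "0 < c" "limsup (\<lambda>n. ereal (X n)) = \<infinity>"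
  shows "limsup (\<lambda>n. ereal (Y n)) = \<infinity>"
proof -
  have "limsup (\<lambda>n. ereal (Y n)) = limsup (\<lambda>n. ereal c * ereal (X n))"
    using assms(1) by (intro Limsup_eq) (auto elim: eventually_mono)
  also have "\<dots> = ereal c * limsup (\<lambda>n. ereal (X n))"
    using assms(2) by (intro limsup_ereal_mult_left) simp
  finally show ?thesis using assms(2,3) by simp
qed

lemma mlrandom_widened_forecast_limits:
  assumes \<phi>: "forecasting_system \<phi>" "computable_fc \<phi>" "precise_fc \<phi>" "mlrandom \<phi> \<omega>" and "0 < e"
  shows "mlrandom (\<lambda>_. {forecast_liminf \<phi> \<omega> - e..forecast_limsup \<phi> \<omega> + e} \<inter> {0..1}) \<omega>"
proof (rule ccontr)
  define J where "J = {forecast_liminf \<phi> \<omega> - e..forecast_limsup \<phi> \<omega> + e} \<inter> {0..1::real}"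
  assume "\<not> mlrandom (\<lambda>_. J) \<omega>"
  then obtain T where T: "lower_semicomputable T" "test_supermartingale (\<lambda>_. J) T"
    "limsup (\<lambda>n. ereal (T (prefix \<omega> n))) = \<infinity>"
    unfolding mlrandom_def by blast
  obtain pass where pass: "decidable_sit pass"
    "\<And>t. pass t \<Longrightarrow> forecast_liminf \<phi> \<omega> - e \<le> lower_fc \<phi> t \<and> lower_fc \<phi> t \<le> forecast_limsup \<phi> \<omega> + e"
    "\<And>t. forecast_liminf \<phi> \<omega> - e / 2 < lower_fc \<phi> t \<Longrightarrow> lower_fc \<phi> t < forecast_limsup \<phi> \<omega> + e / 2 \<Longrightarrow> pass t"
    using decidable_forecast_region[OF \<phi>(2) \<open>0 < e\<close>] by blast
  have pass_J: "\<phi> t \<subseteq> J" if "pass t" for t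
  proof -
    have "lower_fc \<phi> t \<in> {0..1}" using forecasting_systemD(2,3)[OF \<phi>(1), of t] by blast
    with pass(2)[OF that] have "lower_fc \<phi> t \<in> J" unfolding J_def by simp
    then show ?thesis using precise_fc_singleton[OF \<phi>(1,3), of t] by simp
  qed
  have "\<forall>\<^sub>F n in sequentially. pass (prefix \<omega> n)"
    using eventually_near_forecast_limits[OF \<phi>(1) half_gt_zero[OF \<open>0 < e\<close>], of \<omega>]
    by (rule eventually_mono) (use pass(3) in blast)
  then obtain N0 where N0: "\<And>n. N0 \<le> n \<Longrightarrow> pass (prefix \<omega> n)"
    unfolding eventually_sequentially by blast
  obtain N where N: "0 < N" "\<And>n. N \<le> n \<Longrightarrow> pass (prefix \<omega> n)"
  proof (rule that[of "Suc N0"])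
    show "pass (prefix \<omega> n)" if "Suc N0 \<le> n" for n using N0 that by simp
  qed simp
  have T_nonneg: "0 \<le> T s" for s using T(2) unfolding test_supermartingale_def by blast
  obtain c :: rat where c: "0 < c" "\<And>s. length s = N \<Longrightarrow> of_rat c * T s \<le> 1"
    using rat_scaling_le_one[of T N] T_nonneg by blast
  define T' where "T' s = (if length s < N then 1 else of_rat c * T (stopped pass N s))" for s
  have "test_supermartingale \<phi> T'"
    unfolding T'_def
  proof (rule test_supermartingale_stopped[OF \<phi>(1) T(2)])
    show "J \<subseteq> {0..1}" unfolding J_def by blast
  qed (use pass_J c N(1) in auto)
  moreover have "lower_semicomputable T'"
    unfolding T'_def using pass(1) T(1) c by (intro lower_semicomputable_stopped) simp_all
  moreover have "\<forall>\<^sub>F n in sequentially. T' (prefix \<omega> n) = of_rat c * T (prefix \<omega> n)"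
    using eventually_ge_at_top[of N]
  proof eventually_elim
    case (elim n)
    then have "stopped pass N (prefix \<omega> n) = prefix \<omega> n"
      using N(2) by (intro stopped_eq_self) (auto simp: prefix_def take_map)
    then show ?case using elim by (simp add: T'_def prefix_def)
  qed
  then have "limsup (\<lambda>n. ereal (T' (prefix \<omega> n))) = \<infinity>"
    by (rule limsup_eq_PInf_eventually_scaled) (use c(1) T(3) in simp_all)
  ultimately show False using \<phi>(4) unfolding mlrandom_def by blast
qed

lemma clipped_interval: "{a..b} \<inter> {0..1} = {max 0 a..min 1 b :: real}"
  by auto

lemma I_mlr_eq_forecast_limits:
  assumes \<phi>: "forecasting_system \<phi>" "computable_fc \<phi>" "precise_fc \<phi>" "mlrandom \<phi> \<omega>"
  shows "I_mlr \<omega> = {forecast_liminf \<phi> \<omega>..forecast_limsup \<phi> \<omega>}"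
proof
  let ?L = "forecast_liminf \<phi> \<omega>" and ?U = "forecast_limsup \<phi> \<omega>"
  note LU = forecast_limits(3-5)[OF \<phi>(1), of \<omega>]
  show "I_mlr \<omega> \<subseteq> {?L..?U}"
  proof
    fix x assume x: "x \<in> I_mlr \<omega>"
    have "?L - e \<le> x \<and> x \<le> ?U + e" if "0 < e" for e
    proof -
      have "interval_forecast ({?L - e..?U + e} \<inter> {0..1})"
        unfolding clipped_interval interval_forecast_def using LU that by fastforce
      with mlrandom_widened_forecast_limits[OF \<phi> that] x show ?thesis unfolding I_mlr_def by auto
    qed
    then show "x \<in> {?L..?U}"
      by (auto intro: field_le_epsilon simp: algebra_simps)
  qed
  show "{?L..?U} \<subseteq> I_mlr \<omega>"
    unfolding I_mlr_def interval_forecast_def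
    using mlrandom_interval_bounds_forecast_limits[OF \<phi>] by fastforce
qed

lemma almost_mlrandom_iff_forecast_limits:
  assumes \<phi>: "forecasting_system \<phi>" "computable_fc \<phi>" "precise_fc \<phi>" "mlrandom \<phi> \<omega>"
    and "0 \<le> c" "c \<le> d" "d \<le> 1"
  shows "almost_mlrandom {c..d} \<omega> \<longleftrightarrow> c \<le> forecast_liminf \<phi> \<omega> \<and> forecast_limsup \<phi> \<omega> \<le> d"
proof -
  let ?L = "forecast_liminf \<phi> \<omega>" and ?U = "forecast_limsup \<phi> \<omega>"
  note LU = forecast_limits(3-5)[OF \<phi>(1), of \<omega>]
  have "almost_mlrandom {c..d} \<omega> \<longleftrightarrow>
      (\<forall>e1 e2. 0 < e1 \<longrightarrow> 0 < e2 \<longrightarrow> mlrandom (\<lambda>_. {c - e1..d + e2} \<inter> {0..1}) \<omega>)"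
    unfolding almost_mlrandom_def using \<open>c \<le> d\<close> by simp
  also have "\<dots> \<longleftrightarrow> c \<le> ?L \<and> ?U \<le> d"
  proof
    assume random: "\<forall>e1 e2. 0 < e1 \<longrightarrow> 0 < e2 \<longrightarrow> mlrandom (\<lambda>_. {c - e1..d + e2} \<inter> {0..1}) \<omega>"
    have "c - e \<le> ?L \<and> ?U \<le> d + e" if "0 < e" for e
    proof -
      have "mlrandom (\<lambda>_. {max 0 (c - e)..min 1 (d + e)}) \<omega>"
        using random that unfolding clipped_interval by blast
      then have "max 0 (c - e) \<le> ?L \<and> ?U \<le> min 1 (d + e)"
        by (rule mlrandom_interval_bounds_forecast_limits[OF \<phi>, rotated 3])
          (use \<open>0 \<le> c\<close> \<open>c \<le> d\<close> \<open>d \<le> 1\<close> that in auto)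
      then show ?thesis by simp
    qed
    then show "c \<le> ?L \<and> ?U \<le> d"
      by (auto intro: field_le_epsilon simp: algebra_simps)
  next
    assume "c \<le> ?L \<and> ?U \<le> d"
    show "\<forall>e1 e2. 0 < e1 \<longrightarrow> 0 < e2 \<longrightarrow> mlrandom (\<lambda>_. {c - e1..d + e2} \<inter> {0..1}) \<omega>"
    proof (intro allI impI)
      fix e1 e2 :: real assume "0 < e1" "0 < e2"
      then have "0 < min e1 e2" by simp
      from mlrandom_widened_forecast_limits[OF \<phi> this]
      show "mlrandom (\<lambda>_. {c - e1..d + e2} \<inter> {0..1}) \<omega>"
        by (rule mlrandom_mono[rotated 3])
          (use LU \<open>c \<le> ?L \<and> ?U \<le> d\<close> \<open>0 < min e1 e2\<close> in \<open>auto simp: clipped_interval\<close>)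
    qed
  qed
  finally show ?thesis .
qed

theorem proposition4:
  fixes \<phi> :: "bool list \<Rightarrow> real set" and \<omega> :: "nat \<Rightarrow> bool"
  assumes "forecasting_system \<phi>" and "computable_fc \<phi>" and "precise_fc \<phi>"
    and "mlrandom \<phi> \<omega>"
  shows "interval_forecast (I_mlr \<omega>) \<and> almost_mlrandom (I_mlr \<omega>) \<omega> \<and>
         (\<forall>I. interval_forecast I \<and> almost_mlrandom I \<omega> \<longrightarrow> I_mlr \<omega> \<subseteq> I)"
proof (intro conjI allI impI)
  note I_mlr = I_mlr_eq_forecast_limits[OF assms]
  note LU = forecast_limits(3-5)[OF assms(1), of \<omega>]
  note almost = almost_mlrandom_iff_forecast_limits[OF assms]
  show "interval_forecast (I_mlr \<omega>)"
    unfolding I_mlr interval_forecast_def using LU by blast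
  show "almost_mlrandom (I_mlr \<omega>) \<omega>"
    unfolding I_mlr using almost[OF LU] by simp
  fix I assume "interval_forecast I \<and> almost_mlrandom I \<omega>"
  then obtain c d where "0 \<le> c" "c \<le> d" "d \<le> 1" "I = {c..d}" "almost_mlrandom {c..d} \<omega>"
    unfolding interval_forecast_def by blast
  then show "I_mlr \<omega> \<subseteq> I" unfolding I_mlr using almost by auto
qed

end
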